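(* Let $\pi$ and $\pi'$ be grounded permutations of length $k$ that are strongly c-forest-Wilf equivalent. Then $\pi$ and $\pi'$ have the same streak, and for every $i\in\{2,\dots,k\}$ the height of $i$ in $\pi$ equals the height of $i$ in $\pi'$.
   Context: A pattern of length $k$ is a permutation $\pi=\pi(1)\cdots\pi(k)$ of $[k]$. The streak of $\pi$ is the largest integer $m$ with $\pi(i)=i$ for all $1\le i\le m$. For $1<i\le k$, the height of $\pi(i)$ in $\pi$ is the largest integer $m<i$ such that $\pi(i-m+1)<\cdots<\pi(i)$; for a value $j\ne\pi(1)$, the height of $j$ in $\pi$ is the height of $\pi(i)$ where $\pi(i)=j$. $\pi$ is grounded if $\pi\ne 12\cdots k$ and there is a positive integer $m$ with $\pi(1)\cdots\pi(m)=1\cdots m$ such that $\pi(2)\cdots\pi(k)$ contains no $m+1$ consecutive entries in increasing order. Rooted labeled forests on $[n]$ are unordered forests with a root in each component and distinct labels from $[n]$; a consecutive instance of $\pi$ is a downward path $v_1,\dots,v_k$ ($v_i$ the parent of $v_{i+1}$) whose labels are in the same relative order as $\pi$. Patterns $\pi,\pi'$ are strongly c-forest-Wilf equivalent if for all $m,n\ge0$ the number of rooted labeled forests on $[n]$ with exactly $m$ consecutive instances of $\pi$ equals the number with exactly $m$ consecutive instances of $\pi'$. *)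

theory Defs
  imports Main
begin

(* Patterns are lists; entry pi(i) (1-indexed) is pi ! (i - 1). *)
definition is_pattern :: "nat list \<Rightarrow> bool" where
  "is_pattern pi \<longleftrightarrow> distinct pi \<and> set pi = {1..length pi}"

definition pe :: "nat list \<Rightarrow> nat \<Rightarrow> nat" where
  "pe pi i = pi ! (i - 1)"

definition streak :: "nat list \<Rightarrow> nat" where
  "streak pi = Max {m. m \<le> length pi \<and> (\<forall>i\<in>{1..m}. pe pi i = i)}"

definition height_pos :: "nat list \<Rightarrow> nat \<Rightarrow> nat" where
  "height_pos pi i = Max {m. 1 \<le> m \<and> m < i \<and>
       (\<forall>j. i - m + 1 \<le> j \<and> j < i \<longrightarrow> pe pi j < pe pi (Suc j))}"

definition height_val :: "nat list \<Rightarrow> nat \<Rightarrow> nat" where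
  "height_val pi j = height_pos pi (THE i. 1 \<le> i \<and> i \<le> length pi \<and> pe pi i = j)"

definition grounded :: "nat list \<Rightarrow> bool" where
  "grounded pi \<longleftrightarrow> pi \<noteq> [1..<Suc (length pi)] \<and>
     (\<exists>m. 0 < m \<and> m \<le> length pi \<and> (\<forall>i\<in>{1..m}. pe pi i = i) \<and>
        \<not> (\<exists>j. 2 \<le> j \<and> j + m \<le> length pi \<and>
              (\<forall>l. j \<le> l \<and> l < j + m \<longrightarrow> pe pi l < pe pi (Suc l))))"

(* Rooted labeled forests on [n], represented by their parent maps
   (None = root); acyclicity: following parents from any vertex reaches a root. *)
definition forests :: "nat \<Rightarrow> (nat \<Rightarrow> nat option) set" where
  "forests n = {p. (\<forall>v. v \<notin> {1..n} \<longrightarrow> p v = None) \<and>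
      (\<forall>v\<in>{1..n}. \<forall>u. p v = Some u \<longrightarrow> u \<in> {1..n}) \<and>
      (\<forall>v\<in>{1..n}. \<exists>j. ((\<lambda>x. Option.bind x p) ^^ j) (Some v) = None)}"

(* consecutive instances: downward paths v_1..v_k (v_i parent of v_{i+1})
   order-isomorphic to pi *)
definition instances :: "nat list \<Rightarrow> nat \<Rightarrow> (nat \<Rightarrow> nat option) \<Rightarrow> nat list set" where
  "instances pi n p = {vs. length vs = length pi \<and> set vs \<subseteq> {1..n} \<and>
      (\<forall>i. Suc i < length vs \<longrightarrow> p (vs ! Suc i) = Some (vs ! i)) \<and>
      (\<forall>i<length vs. \<forall>j<length vs. vs ! i < vs ! j \<longleftrightarrow> pi ! i < pi ! j)}"

definition num_instances :: "nat list \<Rightarrow> nat \<Rightarrow> (nat \<Rightarrow> nat option) \<Rightarrow> nat" where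
  "num_instances pi n p = card (instances pi n p)"

definition strongly_c_forest_wilf_equiv :: "nat list \<Rightarrow> nat list \<Rightarrow> bool" where
  "strongly_c_forest_wilf_equiv pi pi' \<longleftrightarrow>
     (\<forall>m n. card {p \<in> forests n. num_instances pi n p = m} =
            card {p \<in> forests n. num_instances pi' n p = m})"

end

theory Submission
  imports Defs
begin

text \<open>Let \<open>N p\<close> be the number of consecutive instances of a pattern in the forest
  \<open>p\<close>. Strong c-forest-Wilf equivalence preserves the distribution of \<open>N\<close> over the forests
  on \<open>[n]\<close>, hence the second factorial moment \<open>\<Sum>p. N p * (N p - 1)\<close>, which counts pairs
  of distinct copies of the pattern realised as paths of one forest. Pairs of disjoint copies
  contribute the same for all patterns of length \<open>k\<close>; for overlapping pairs the number of
  forests depends only on the union \<open>U\<close> of the two vertex sets, and the number of realisable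
  overlapping pairs with union \<open>U\<close> depends only on \<open>card U\<close>. By induction on \<open>card U\<close>, the
  numbers of realisable overlapping pairs covering \<open>{1..u}\<close> agree for both patterns.

  Two such copies share \<open>ov = 2k - u\<close> vertices, and the second one starts at some position
  \<open>s\<close> of the first and follows it for \<open>ov\<close> vertices. Shift \<open>0\<close> contributes at most
  \<open>(2k - 2ov) choose (k - ov)\<close> pairs, with equality when \<open>ov \<le> streak\<close>. A shift \<open>s \<ge> 1\<close>
  needs \<open>ov\<close> ascending entries from position \<open>s\<close> on, which for a grounded pattern happens
  only when \<open>ov \<le> streak\<close>, and then contributes twice \<open>(2k - ov - v) choose (k - ov)\<close>, where
  \<open>v\<close> is the value ending that run. Comparing at \<open>ov = streak + 1\<close> shows that the streaks
  agree. Below the streak, each binomial weight is at least twice the next one, so their sum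
  determines the set of values \<open>v\<close> of height at least \<open>ov\<close>.\<close>

definition is_path :: "(nat \<Rightarrow> nat option) \<Rightarrow> nat list \<Rightarrow> bool" where
  "is_path p vs \<longleftrightarrow> (\<forall>i. Suc i < length vs \<longrightarrow> p (vs ! Suc i) = Some (vs ! i))"

section \<open>Forests as ranked parent maps\<close>

text \<open>Acyclicity of a parent map, expressed by a rank that strictly decreases from child to
  parent; equivalent to the iteration condition in \<open>forests\<close>.\<close>

definition forest_on :: "nat \<Rightarrow> (nat \<Rightarrow> nat option) \<Rightarrow> bool" where
  "forest_on n p \<longleftrightarrow> (\<forall>v. v \<notin> {1..n} \<longrightarrow> p v = None) \<and>
     (\<forall>v u. p v = Some u \<longrightarrow> u \<in> {1..n}) \<and>
     (\<exists>d::nat\<Rightarrow>nat. \<forall>v u. p v = Some u \<longrightarrow> d u < d v)"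

lemma parent_iter_Suc:
  "((\<lambda>x. Option.bind x p) ^^ Suc j) (Some v) = ((\<lambda>x. Option.bind x p) ^^ j) (p v)"
  by (simp add: funpow_Suc_right del: funpow.simps)

lemma forest_on_if_forests:
  assumes "p \<in> forests n"
  shows "forest_on n p"
proof -
  let ?it = "\<lambda>j v. ((\<lambda>x. Option.bind x p) ^^ j) (Some v)"
  have none: "\<forall>v. v \<notin> {1..n} \<longrightarrow> p v = None"
    and closed: "\<forall>v\<in>{1..n}. \<forall>u. p v = Some u \<longrightarrow> u \<in> {1..n}"
    and reach: "\<forall>v\<in>{1..n}. \<exists>j. ?it j v = None"
    using assms unfolding forests_def by blast+
  have parent_in: "v \<in> {1..n}" "u \<in> {1..n}" if "p v = Some u" for v u
    using that none closed by (metis option.distinct(1))+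
  define d where "d v = (LEAST j. ?it j v = None)" for v
  have d_None: "?it (d v) v = None" if "v \<in> {1..n}" for v
    unfolding d_def using reach that by (meson LeastI)
  have "d u < d v" if pv: "p v = Some u" for v u
  proof -
    have "d v \<noteq> 0"
    proof
      assume "d v = 0"
      with d_None[OF parent_in(1)[OF pv]] show False by simp
    qed
    then obtain j where j: "d v = Suc j" by (cases "d v") auto
    have "?it j u = None"
      using d_None[OF parent_in(1)[OF pv]] j pv by (simp only: parent_iter_Suc)
    then have "d u \<le> j" unfolding d_def by (rule Least_le)
    then show ?thesis using j by simp
  qed
  then show ?thesis
    unfolding forest_on_def using none parent_in by blast
qed

lemma forests_if_forest_on:
  assumes "forest_on n p"
  shows "p \<in> forests n"
proof -
  obtain d :: "nat \<Rightarrow> nat" where d: "\<And>v u. p v = Some u \<Longrightarrow> d u < d v"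
    using assms unfolding forest_on_def by blast
  have "\<exists>j. ((\<lambda>x. Option.bind x p) ^^ j) (Some v) = None" for v
  proof (induction "d v" arbitrary: v rule: less_induct)
    case less
    show ?case
    proof (cases "p v")
      case None
      then have "((\<lambda>x. Option.bind x p) ^^ Suc 0) (Some v) = None"
        by (simp only: parent_iter_Suc) simp
      then show ?thesis by blast
    next
      case (Some u)
      then obtain j where "((\<lambda>x. Option.bind x p) ^^ j) (Some u) = None"
        using less d by blast
      then have "((\<lambda>x. Option.bind x p) ^^ Suc j) (Some v) = None"
        using Some by (simp only: parent_iter_Suc)
      then show ?thesis by blast
    qed
  qed
  then show ?thesis using assms unfolding forest_on_def forests_def by blast
qed

lemma forests_iff_forest_on: "p \<in> forests n \<longleftrightarrow> forest_on n p"
  using forest_on_if_forests forests_if_forest_on by blast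

lemma rank_root_le:
  assumes d: "\<forall>v u. p v = Some u \<longrightarrow> d u < (d v::nat)"
    and U: "\<forall>v\<in>U-{r}. p v \<in> Some ` U"
  shows "x \<in> U \<Longrightarrow> d r \<le> d x"
proof (induction "d x" arbitrary: x rule: less_induct)
  case less
  show ?case
  proof (cases "x = r")
    case False
    then obtain y where "p x = Some y" "y \<in> U" using U less.prems by blast
    then show ?thesis using d less by (metis less_imp_le order_trans)
  qed simp
qed

lemma parent_root_notin:
  assumes d: "\<forall>v u. p v = Some u \<longrightarrow> d u < (d v::nat)"
    and U: "\<forall>v\<in>U-{r}. p v \<in> Some ` U"
  shows "p r \<notin> Some ` U"
  using rank_root_le[OF d U] d by (metis imageE leD)

text \<open>\<open>regraft U r r' p0 p\<close> replaces the tree that \<open>p\<close> spans on \<open>U\<close> (rooted at \<open>r\<close>) by the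
  tree that \<open>p0\<close> spans on \<open>U\<close> (rooted at \<open>r'\<close>), hanging \<open>r'\<close> where \<open>r\<close> used to hang.\<close>

definition regraft ::
  "nat set \<Rightarrow> nat \<Rightarrow> nat \<Rightarrow> (nat \<Rightarrow> nat option) \<Rightarrow> (nat \<Rightarrow> nat option) \<Rightarrow>
    nat \<Rightarrow> nat option" where
  "regraft U r r' p0 p v = (if v \<in> U \<and> v \<noteq> r' then p0 v else if v = r'
      then p r else p v)"

lemma regraft_inside:
  "v \<in> U \<Longrightarrow> v \<noteq> r' \<Longrightarrow> regraft U r r' p0 p v = p0 v"
  unfolding regraft_def by simp

lemma regraft_outside:
  "v \<notin> U \<Longrightarrow> r' \<in> U \<Longrightarrow> regraft U r r' p0 p v = p v"
  unfolding regraft_def by auto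

lemma regraft_rank:
  fixes d d0 :: "nat \<Rightarrow> nat"
  assumes d: "\<forall>v u. p v = Some u \<longrightarrow> d u < d v"
    and d0: "\<forall>v u. p0 v = Some u \<longrightarrow> d0 u < d0 v"
    and fin: "finite U" and r': "r' \<in> U"
    and U: "\<forall>v\<in>U-{r}. p v \<in> Some ` U"
    and U0: "\<forall>v\<in>U-{r'}. p0 v \<in> Some ` U"
  shows "\<exists>d'::nat\<Rightarrow>nat. \<forall>v u. regraft U r r' p0 p v = Some u \<longrightarrow> d' u < d' v"
proof -
  define M where "M = Suc (Max (d0 ` U))"
  have d0_less: "v \<in> U \<Longrightarrow> d0 v < M" for v
    unfolding M_def using fin by (simp add: le_imp_less_Suc)
  \<comment> \<open>lexicographic rank: \<open>U\<close> sits at the level of its old root \<open>r\<close>, ordered by \<open>d0\<close> inside\<close>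
  have M_pos: "0 < M" unfolding M_def by simp
  define d' where "d' v = (if v \<in> U then M * d r + d0 v else M * d v + (M - 1))" for v
  have "d' u < d' v" if e: "regraft U r r' p0 p v = Some u" for u v
  proof (cases "v \<in> U \<and> v \<noteq> r'")
    case True
    then have "p0 v = Some u" using e by (simp add: regraft_inside)
    moreover then have "u \<in> U" using U0 True by force
    ultimately show ?thesis using d0 True unfolding d'_def by force
  next
    case not_inside: False
    show ?thesis
    proof (cases "v = r'")
      case True
      then have pr: "p r = Some u" using e unfolding regraft_def by simp
      then have "u \<notin> U" using parent_root_notin[OF d U] by blast
      moreover have "d u < d r" using d pr by blast
      then have "M * Suc (d u) \<le> M * d r" by (intro mult_le_mono2) simp
      ultimately show ?thesis using True r' M_pos unfolding d'_def by simp
    next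
      case False
      then have vU: "v \<notin> U" using not_inside by blast
      have du: "d u < d v" using d e vU r' by (simp add: regraft_outside)
      show ?thesis
      proof (cases "u \<in> U")
        case True
        have "d r < d v" using rank_root_le[OF d U True] du by simp
        then have "M * Suc (d r) \<le> M * d v" by (intro mult_le_mono2) simp
        then show ?thesis using d0_less[OF True] True vU unfolding d'_def by simp
      next
        case False
        have "M * Suc (d u) \<le> M * d v" using du by (intro mult_le_mono2) simp
        then show ?thesis using False vU unfolding d'_def M_def by simp
      qed
    qed
  qed
  then show ?thesis by blast
qed

lemma forest_on_regraft:
  assumes F: "forest_on n p" and F0: "forest_on n p0" and Un: "U \<subseteq> {1..n}"
    and r': "r' \<in> U" and U: "\<forall>v\<in>U-{r}. p v \<in> Some ` U"
    and U0: "\<forall>v\<in>U-{r'}. p0 v \<in> Some ` U"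
  shows "forest_on n (regraft U r r' p0 p)"
proof -
  obtain d :: "nat \<Rightarrow> nat" where d: "\<forall>v u. p v = Some u \<longrightarrow> d u < d v"
    using F unfolding forest_on_def by blast
  obtain d0 :: "nat \<Rightarrow> nat" where d0: "\<forall>v u. p0 v = Some u \<longrightarrow> d0 u < d0 v"
    using F0 unfolding forest_on_def by blast
  have "finite U" using Un finite_subset by blast
  note rank = regraft_rank[OF d d0 this r' U U0]
  have none: "\<forall>v. v \<notin> {1..n} \<longrightarrow> regraft U r r' p0 p v = None"
  proof (intro allI impI)
    fix v assume v: "v \<notin> {1..n}"
    then have "v \<notin> U" using Un by blast
    moreover have "p v = None" using v F unfolding forest_on_def by blast
    ultimately show "regraft U r r' p0 p v = None" using r' by (simp add: regraft_outside)
  qed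
  have closed: "\<forall>v u. regraft U r r' p0 p v = Some u \<longrightarrow> u \<in> {1..n}"
  proof (intro allI impI)
    fix v u assume "regraft U r r' p0 p v = Some u"
    then have "p0 v = Some u \<or> p r = Some u \<or> p v = Some u"
      unfolding regraft_def by (simp split: if_splits)
    then show "u \<in> {1..n}" using F F0 unfolding forest_on_def by blast
  qed
  show ?thesis unfolding forest_on_def by (intro conjI none closed rank)
qed

lemma regraft_inj:
  assumes r': "r' \<in> U" and agree: "\<forall>v\<in>U-{r}. p1 v = p2 v"
    and eq: "regraft U r r' p0 p1 = regraft U r r' p0 p2"
  shows "p1 = p2"
proof
  fix v
  show "p1 v = p2 v"
  proof (cases "v \<in> U")
    case True
    moreover have "regraft U r r' p0 p1 r' = regraft U r r' p0 p2 r'" using eq by simp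
    ultimately show ?thesis using agree unfolding regraft_def by (cases "v = r") auto
  next
    case False
    then have "regraft U r r' p0 p1 v = regraft U r r' p0 p2 v" using eq by simp
    then show ?thesis using False r' by (simp add: regraft_outside)
  qed
qed

definition relabel ::
  "nat set \<Rightarrow> (nat \<Rightarrow> nat) \<Rightarrow> (nat \<Rightarrow> nat option) \<Rightarrow> nat \<Rightarrow> nat option" where
  "relabel U f p w = (if w \<in> f ` U then (case p (the_inv_into U f w) of None \<Rightarrow> None
      | Some x \<Rightarrow> if x \<in> U then Some (f x) else None) else None)"

lemma forest_on_relabel:
  assumes F: "forest_on N p" and inj: "inj_on f U" and img: "f ` U \<subseteq> {1..n}"
  shows "forest_on n (relabel U f p)"
proof -
  obtain d :: "nat \<Rightarrow> nat" where d: "\<forall>v u. p v = Some u \<longrightarrow> d u < d v"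
    using F unfolding forest_on_def by blast
  define d' where "d' w = d (the_inv_into U f w)" for w
  have "\<forall>w y. relabel U f p w = Some y \<longrightarrow> d' y < d' w"
  proof (intro allI impI)
    fix w y assume e: "relabel U f p w = Some y"
    obtain v where v: "v \<in> U" "w = f v" using e unfolding relabel_def by (auto split: if_splits)
    then have iv: "the_inv_into U f w = v" using inj by (simp add: the_inv_into_f_f)
    obtain x where x: "p v = Some x" "x \<in> U" "y = f x"
      using e v iv unfolding relabel_def by (auto split: option.splits if_splits)
    then show "d' y < d' w" unfolding d'_def using iv d inj by (simp add: the_inv_into_f_f)
  qed
  moreover have "\<forall>v. v \<notin> {1..n} \<longrightarrow> relabel U f p v = None"
    using img unfolding relabel_def by auto
  moreover have "\<forall>v u. relabel U f p v = Some u \<longrightarrow> u \<in> {1..n}"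
    using img unfolding relabel_def by (auto split: option.splits if_splits)
  ultimately show ?thesis unfolding forest_on_def by blast
qed

lemma is_path_relabel:
  assumes "is_path p vs" "set vs \<subseteq> U" "inj_on f U"
  shows "is_path (relabel U f p) (map f vs)"
  unfolding is_path_def
proof (intro allI impI)
  fix i assume i: "Suc i < length (map f vs)"
  have "vs ! Suc i \<in> U" "vs ! i \<in> U" using i assms(2) by auto
  moreover have "p (vs ! Suc i) = Some (vs ! i)" using assms(1) i unfolding is_path_def by simp
  ultimately show "relabel U f p (map f vs ! Suc i) = Some (map f vs ! i)"
    using i assms(3) unfolding relabel_def by (simp add: the_inv_into_f_f)
qed

section \<open>Copies of a pattern and the second moment\<close>

definition order_iso :: "nat list \<Rightarrow> nat list \<Rightarrow> bool" where
  "order_iso pi vs \<longleftrightarrow> length vs = length pi \<and>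
     (\<forall>i<length vs. \<forall>j<length vs. vs ! i < vs ! j \<longleftrightarrow> pi ! i < pi ! j)"

definition copies :: "nat list \<Rightarrow> nat \<Rightarrow> nat list set" where
  "copies pi n = {vs. order_iso pi vs \<and> set vs \<subseteq> {1..n}}"

lemma instances_eq_copies: "instances pi n p = {vs \<in> copies pi n. is_path p vs}"
  unfolding instances_def copies_def order_iso_def is_path_def by auto

lemma finite_copies: "finite (copies pi n)"
proof (rule finite_subset)
  show "copies pi n \<subseteq> {xs. set xs \<subseteq> {1..n} \<and> length xs = length pi}"
    unfolding copies_def order_iso_def by auto
qed (rule finite_lists_length_eq, simp)

lemma finite_forests: "finite (forests n)"
proof (rule finite_subset)
  show "forests n \<subseteq> {p. \<forall>v. (v \<in> {1..n} \<longrightarrow> p v \<in> insert None (Some ` {1..n})) \<and>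
      (v \<notin> {1..n} \<longrightarrow> p v = None)}"
  proof (intro subsetI CollectI allI conjI impI)
    fix p v assume "p \<in> forests n"
    then have "\<forall>v. v \<notin> {1..n} \<longrightarrow> p v = None" "\<forall>v u. p v = Some u \<longrightarrow> u \<in> {1..n}"
      unfolding forests_iff_forest_on forest_on_def by blast+
    then show "p v \<in> insert None (Some ` {1..n})"
      "v \<notin> {1..n} \<Longrightarrow> p v = None"
      by (cases "p v"; blast)+
  qed
qed (rule finite_set_of_finite_funs, simp_all)

definition joint_forests ::
  "nat \<Rightarrow> nat list \<Rightarrow> nat list \<Rightarrow> nat" where
  "joint_forests n P Q = card {p \<in> forests n. is_path p P \<and> is_path p Q}"

definition copy_pairs ::
  "nat list \<Rightarrow> nat \<Rightarrow> (nat list \<times> nat list) set" where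
  "copy_pairs pi n = {x \<in> copies pi n \<times> copies pi n. fst x \<noteq> snd x}"

definition pair_sum :: "nat list \<Rightarrow> nat \<Rightarrow> nat" where
  "pair_sum pi n = (\<Sum>x\<in>copy_pairs pi n. joint_forests n (fst x) (snd x))"

lemma finite_copy_pairs: "finite (copy_pairs pi n)"
  unfolding copy_pairs_def using finite_copies by auto

lemma card_off_diagonal:
  assumes "finite A"
  shows "card {x \<in> A \<times> A. fst x \<noteq> snd x} = card A * (card A - 1)"
proof -
  have "{x \<in> A \<times> A. fst x \<noteq> snd x} = A \<times> A - (\<lambda>a. (a, a)) ` A"
    by auto
  moreover have "card ((\<lambda>a. (a, a)) ` A) = card A"
    by (rule card_image) (auto simp: inj_on_def)
  ultimately show ?thesis
    using assms by (simp add: card_Diff_subset card_cartesian_product diff_mult_distrib2 image_subset_iff)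
qed

lemma sum_eq_if_card_fibres_eq:
  fixes g :: "'a \<Rightarrow> 'b::comm_semiring_1"
  assumes S: "finite S"
    and fibres: "\<And>m. card {x \<in> S. f x = m} = card {x \<in> S. f' x = m}"
  shows "(\<Sum>x\<in>S. g (f x)) = (\<Sum>x\<in>S. g (f' x))"
proof -
  let ?T = "f ` S \<union> f' ` S"
  have group: "(\<Sum>x\<in>S. g (h x)) = (\<Sum>m\<in>?T. of_nat (card {x \<in> S. h x = m}) * g m)"
    if "h ` S \<subseteq> ?T" for h
  proof -
    have "(\<Sum>x\<in>S. g (h x)) = (\<Sum>m\<in>?T. \<Sum>x\<in>{x \<in> S. h x = m}. g (h x))"
      by (rule sum.group[symmetric, OF S _ that]) (use S in simp)
    also have "\<dots> = (\<Sum>m\<in>?T. of_nat (card {x \<in> S. h x = m}) * g m)"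
      by (rule sum.cong) simp_all
    finally show ?thesis .
  qed
  show ?thesis using group[of f] group[of f'] fibres by simp
qed

lemma sum_falling_moment_eq_pair_sum:
  "(\<Sum>p\<in>forests n. num_instances pi n p * (num_instances pi n p - 1)) = pair_sum pi n"
proof -
  have "num_instances pi n p * (num_instances pi n p - 1) =
      card {x \<in> copy_pairs pi n. is_path p (fst x) \<and> is_path p (snd x)}" for p
  proof -
    let ?I = "{vs \<in> copies pi n. is_path p vs}"
    have "finite ?I" using finite_copies by simp
    then have "num_instances pi n p * (num_instances pi n p - 1) = card {x \<in> ?I \<times> ?I. fst x \<noteq> snd x}"
      unfolding num_instances_def instances_eq_copies by (simp add: card_off_diagonal)
    also have "{x \<in> ?I \<times> ?I. fst x \<noteq> snd x} =
        {x \<in> copy_pairs pi n. is_path p (fst x) \<and> is_path p (snd x)}"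
      unfolding copy_pairs_def by auto
    finally show ?thesis .
  qed
  then have "(\<Sum>p\<in>forests n. num_instances pi n p * (num_instances pi n p - 1)) =
      (\<Sum>p\<in>forests n. \<Sum>x\<in>{x \<in> copy_pairs pi n. is_path p (fst x) \<and> is_path p (snd x)}. 1)"
    by simp
  also have "\<dots> = (\<Sum>x\<in>copy_pairs pi n. \<Sum>p\<in>{p \<in> forests n. is_path p (fst x) \<and> is_path p (snd x)}. 1)"
    by (rule sum.swap_restrict[OF finite_forests finite_copy_pairs])
  finally show ?thesis unfolding pair_sum_def joint_forests_def by simp
qed

lemma wilf_equiv_pair_sum_eq:
  assumes "strongly_c_forest_wilf_equiv pi pi'"
  shows "pair_sum pi n = pair_sum pi' n"
proof -
  have "(\<Sum>p\<in>forests n. (\<lambda>m. m * (m - 1)) (num_instances pi n p)) =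
      (\<Sum>p\<in>forests n. (\<lambda>m. m * (m - 1)) (num_instances pi' n p))"
    using assms finite_forests unfolding strongly_c_forest_wilf_equiv_def
    by (intro sum_eq_if_card_fibres_eq) auto
  then show ?thesis by (simp only: sum_falling_moment_eq_pair_sum)
qed

lemma card_indices_filter:
  assumes "distinct xs"
  shows "card {j. j < length xs \<and> Q (xs ! j)} = card {x \<in> set xs. Q x}"
proof -
  have "inj_on (\<lambda>j. xs ! j) {j. j < length xs \<and> Q (xs ! j)}"
    using assms by (auto simp: inj_on_def nth_eq_iff_index_eq)
  then have "card ((\<lambda>j. xs ! j) ` {j. j < length xs \<and> Q (xs ! j)}) =
      card {j. j < length xs \<and> Q (xs ! j)}"
    by (rule card_image)
  moreover have "(\<lambda>j. xs ! j) ` {j. j < length xs \<and> Q (xs ! j)} = {x \<in> set xs. Q x}"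
    by (auto simp: in_set_conv_nth)
  ultimately show ?thesis by simp
qed

lemma order_iso_length: "order_iso pi vs \<Longrightarrow> length vs = length pi"
  unfolding order_iso_def by simp

lemma order_iso_less_iff:
  "order_iso pi vs \<Longrightarrow> i < length pi \<Longrightarrow> j < length pi \<Longrightarrow> vs ! i < vs ! j \<longleftrightarrow> pi ! i < pi ! j"
  unfolding order_iso_def by simp

lemma is_pattern_distinct: "is_pattern pi \<Longrightarrow> distinct pi"
  unfolding is_pattern_def by simp

lemma is_pattern_set: "is_pattern pi \<Longrightarrow> set pi = {1..length pi}"
  unfolding is_pattern_def by simp

lemma is_pattern_nth:
  "is_pattern pi \<Longrightarrow> i < length pi \<Longrightarrow> pi ! i \<in> {1..length pi}"
  using is_pattern_set nth_mem by blast

lemma order_iso_distinct: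
  assumes "order_iso pi vs" "is_pattern pi"
  shows "distinct vs"
proof -
  have "vs ! i \<noteq> vs ! j" if "i < length vs" "j < length vs" "i \<noteq> j" for i j
  proof -
    have l: "length vs = length pi" using assms order_iso_length by blast
    have "pi ! i \<noteq> pi ! j"
      using that l is_pattern_distinct[OF assms(2)] by (simp add: nth_eq_iff_index_eq)
    then have "pi ! i < pi ! j \<or> pi ! j < pi ! i" by arith
    then show ?thesis using order_iso_less_iff[OF assms(1)] that l by fastforce
  qed
  then show ?thesis by (auto simp: distinct_conv_nth)
qed

lemma is_pattern_rank:
  assumes "is_pattern pi" "i < length pi"
  shows "card {j. j < length pi \<and> pi ! j < pi ! i} = pi ! i - 1"
proof -
  have "card {j. j < length pi \<and> pi ! j < pi ! i} = card {x \<in> set pi. x < pi ! i}"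
    by (rule card_indices_filter[OF is_pattern_distinct[OF assms(1)]])
  also have "{x \<in> set pi. x < pi ! i} = {1..<pi ! i}"
    using is_pattern_set[OF assms(1)] is_pattern_nth[OF assms] by auto
  finally show ?thesis by simp
qed

lemma order_iso_rank:
  assumes "order_iso pi vs" "is_pattern pi" "i < length pi"
  shows "card {x \<in> set vs. x < vs ! i} = pi ! i - 1"
proof -
  have l: "length vs = length pi" using assms order_iso_length by blast
  have "card {x \<in> set vs. x < vs ! i} = card {j. j < length vs \<and> vs ! j < vs ! i}"
    by (rule card_indices_filter[OF order_iso_distinct[OF assms(1,2)], symmetric])
  also have "{j. j < length vs \<and> vs ! j < vs ! i} = {j. j < length pi \<and> pi ! j < pi ! i}"
    using order_iso_less_iff[OF assms(1) _ assms(3)] l by auto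
  finally show ?thesis using is_pattern_rank[OF assms(2,3)] by simp
qed

lemma order_iso_card_le:
  assumes "order_iso pi vs" "is_pattern pi" "j < length pi"
  shows "card {z \<in> set vs. z \<le> vs ! j} = card {i. i < length pi \<and> pi ! i \<le> pi ! j}"
proof -
  have l: "length vs = length pi" using assms order_iso_length by blast
  have "card {z \<in> set vs. z \<le> vs ! j} = card {i. i < length vs \<and> vs ! i \<le> vs ! j}"
    by (rule card_indices_filter[OF order_iso_distinct[OF assms(1,2)], symmetric])
  also have "{i. i < length vs \<and> vs ! i \<le> vs ! j} = {i. i < length pi \<and> pi ! i \<le> pi ! j}"
    using order_iso_less_iff[OF assms(1) assms(3)] l by (auto simp: not_less[symmetric])
  finally show ?thesis .
qed

lemma eq_if_rank_eq:
  fixes x y :: "'a::linorder"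
  assumes "finite X" "x \<in> X" "y \<in> X" "card {z \<in> X. z < x} = card {z \<in> X. z < y}"
  shows "x = y"
proof (rule ccontr)
  have less: "card {z \<in> X. z < a} < card {z \<in> X. z < b}" if "a \<in> X" "a < b" for a b
    using that assms(1) by (intro psubset_card_mono) auto
  assume "x \<noteq> y"
  then show False using less[OF assms(2)] less[OF assms(3)] assms(4) by (metis less_irrefl neqE)
qed

lemma order_iso_unique:
  assumes "order_iso pi vs" "order_iso pi ws" "is_pattern pi" "set vs = set ws"
  shows "vs = ws"
proof (rule nth_equalityI)
  show l: "length vs = length ws" using assms(1,2) order_iso_length by metis
  fix i assume i: "i < length vs"
  have ip: "i < length pi" using i assms(1) order_iso_length by metis
  have "card {x \<in> set ws. x < vs ! i} = card {x \<in> set ws. x < ws ! i}"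
    using order_iso_rank[OF assms(1,3) ip] order_iso_rank[OF assms(2,3) ip] assms(4) by simp
  moreover have "vs ! i \<in> set ws" "ws ! i \<in> set ws" using i l assms(4) nth_mem by metis+
  ultimately show "vs ! i = ws ! i" using eq_if_rank_eq[of "set ws"] by blast
qed

definition arrange :: "nat list \<Rightarrow> nat set \<Rightarrow> nat list" where
  "arrange pi X = map (\<lambda>i. sorted_list_of_set X ! (pi ! i - 1)) [0..<length pi]"

lemma length_arrange: "length (arrange pi X) = length pi"
  unfolding arrange_def by simp

lemma strict_sorted_nth_less_iff:
  fixes xs :: "'a::linorder list"
  assumes "sorted_wrt (<) xs" "a < length xs" "b < length xs"
  shows "xs ! a < xs ! b \<longleftrightarrow> a < b"
  by (cases a b rule: linorder_cases) (use assms sorted_wrt_nth_less[OF assms(1)] in force)+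

lemma order_iso_arrange:
  assumes "is_pattern pi" "finite X" "card X = length pi"
  shows "order_iso pi (arrange pi X)"
  unfolding order_iso_def length_arrange
proof (intro conjI allI impI refl)
  let ?s = "sorted_list_of_set X"
  fix i j assume i: "i < length pi" and j: "j < length pi"
  have "pi ! i - 1 < length ?s" "pi ! j - 1 < length ?s"
    using is_pattern_nth[OF assms(1)] i j assms(3) by fastforce+
  then have "?s ! (pi ! i - 1) < ?s ! (pi ! j - 1) \<longleftrightarrow> pi ! i - 1 < pi ! j - 1"
    by (simp add: strict_sorted_nth_less_iff)
  also have "\<dots> \<longleftrightarrow> pi ! i < pi ! j" using is_pattern_nth[OF assms(1)] i j
    by fastforce
  finally show "arrange pi X ! i < arrange pi X ! j \<longleftrightarrow> pi ! i < pi ! j"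
    unfolding arrange_def using i j by simp
qed

lemma set_arrange:
  assumes "is_pattern pi" "finite X" "card X = length pi"
  shows "set (arrange pi X) = X"
proof -
  let ?s = "sorted_list_of_set X"
  have "map (\<lambda>i. ?s ! (pi ! i - 1)) [0..<length pi] = map (\<lambda>v. ?s ! (v - 1)) pi"
    by (rule nth_equalityI) simp_all
  then have "set (arrange pi X) = (\<lambda>a. ?s ! a) ` (\<lambda>v. v - 1) ` {1..length pi}"
    unfolding arrange_def is_pattern_set[OF assms(1), symmetric] by (simp add: image_comp)
  also have "(\<lambda>v. v - 1) ` {1..length pi} = {..<length ?s}"
    using assms(2,3) by (auto simp: image_iff intro!: bexI[of _ "Suc _"])
  also have "(\<lambda>a. ?s ! a) ` {..<length ?s} = set ?s" by (auto simp: in_set_conv_nth)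
  finally show ?thesis using assms(2) by simp
qed

lemma order_iso_card_set:
  assumes "order_iso pi vs" "is_pattern pi"
  shows "card (set vs) = length pi"
  using distinct_card[OF order_iso_distinct[OF assms]] order_iso_length[OF assms(1)] by simp

lemma order_iso_eq_arrange:
  assumes "order_iso pi vs" "is_pattern pi"
  shows "vs = arrange pi (set vs)"
  using order_iso_unique[OF assms(1) order_iso_arrange[OF assms(2)] assms(2)]
    set_arrange[OF assms(2)] order_iso_card_set[OF assms] by simp

lemma order_iso_map_strict_mono:
  assumes "order_iso pi vs" "strict_mono_on (set vs) f"
  shows "order_iso pi (map f vs)"
  using assms(1) strict_mono_on_less[OF assms(2)] unfolding order_iso_def by simp

section \<open>Forests realising families of paths\<close>

definition path_edge :: "nat list list \<Rightarrow> nat \<Rightarrow> nat \<Rightarrow> bool" where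
  "path_edge Ls u v \<longleftrightarrow> (\<exists>L\<in>set Ls. \<exists>i. Suc i < length L \<and> u = L ! i \<and> v = L ! Suc i)"

definition path_child :: "nat list list \<Rightarrow> nat \<Rightarrow> bool" where
  "path_child Ls v \<longleftrightarrow> (\<exists>u. path_edge Ls u v)"

definition all_paths :: "(nat \<Rightarrow> nat option) \<Rightarrow> nat list list \<Rightarrow> bool" where
  "all_paths p Ls \<longleftrightarrow> (\<forall>L\<in>set Ls. is_path p L)"

lemma all_paths_iff: "all_paths p Ls \<longleftrightarrow> (\<forall>u v. path_edge Ls u v \<longrightarrow> p v = Some u)"
  unfolding all_paths_def is_path_def path_edge_def by blast

lemma path_edge_subset:
  "path_edge Ls u v \<Longrightarrow> \<forall>L\<in>set Ls. set L \<subseteq> U \<Longrightarrow> u \<in> U \<and> v \<in> U"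
  unfolding path_edge_def by (metis Suc_lessD nth_mem subsetD)

lemma path_childI:
  assumes "L \<in> set Ls" "v \<in> set L" "v \<noteq> L ! 0"
  shows "path_child Ls v"
proof -
  obtain a where a: "a < length L" "v = L ! a" using assms(2) by (metis in_set_conv_nth)
  with assms(3) have "Suc (a - 1) < length L" "v = L ! Suc (a - 1)" by (cases a; simp)+
  then show ?thesis using assms(1) unfolding path_child_def path_edge_def by blast
qed

lemma path_child_parent_eq:
  assumes "all_paths p Ls" "all_paths p' Ls" "path_child Ls v"
  shows "p v = p' v"
  using assms unfolding all_paths_iff path_child_def by metis

lemma path_child_parent_in:
  assumes "all_paths p Ls" "\<forall>L\<in>set Ls. set L \<subseteq> U" "path_child Ls v"
  shows "p v \<in> Some ` U"
  using assms path_edge_subset unfolding all_paths_iff path_child_def by blast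

text \<open>Double counting by regrafting: fix one forest \<open>pz\<close> realising the paths \<open>Ls'\<close>,
  which span \<open>U\<close>; swapping in its tree on \<open>U\<close> injects the forests realising \<open>Ls\<close> (also
  spanning \<open>U\<close>) into those realising \<open>Ls'\<close>, and keeps the paths \<open>Ks\<close> whose non-heads
  avoid \<open>U\<close>.\<close>

lemma card_regraft_le:
  assumes Un: "U \<subseteq> {1..n}" and r': "r' \<in> U"
    and cov: "\<forall>v\<in>U-{r}. path_child Ls v"
    and sub: "\<forall>L\<in>set Ls. set L \<subseteq> U"
    and pz: "pz \<in> forests n" "all_paths pz Ls'"
    and cov': "\<forall>v\<in>U-{r'}. path_child Ls' v"
    and sub': "\<forall>L\<in>set Ls'. set L \<subseteq> U"
    and Ks: "\<forall>K\<in>set Ks. \<forall>i. Suc i < length K \<longrightarrow> K ! Suc i \<notin> U"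
  shows "card {p \<in> forests n. all_paths p Ls \<and> all_paths p Ks}
    \<le> card {p \<in> forests n. all_paths p Ls' \<and> all_paths p Ks}"
proof -
  let ?A = "{p \<in> forests n. all_paths p Ls \<and> all_paths p Ks}"
  let ?B = "{p \<in> forests n. all_paths p Ls' \<and> all_paths p Ks}"
  let ?f = "regraft U r r' pz"
  have F0: "forest_on n pz" using pz forests_iff_forest_on by blast
  obtain d0 :: "nat \<Rightarrow> nat" where d0: "\<forall>v u. pz v = Some u \<longrightarrow> d0 u < d0 v"
    using F0 unfolding forest_on_def by blast
  have U0: "\<forall>v\<in>U-{r'}. pz v \<in> Some ` U"
    using path_child_parent_in[OF pz(2) sub'] cov' by blast
  have root: "pz r' \<notin> Some ` U" by (rule parent_root_notin[OF d0 U0])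
  have "?f p \<in> ?B" if p: "p \<in> ?A" for p
  proof -
    have "forest_on n p" using p forests_iff_forest_on by blast
    moreover have "\<forall>v\<in>U-{r}. p v \<in> Some ` U"
      using path_child_parent_in[of p Ls U] p sub cov by blast
    ultimately have "forest_on n (?f p)" using forest_on_regraft[OF _ F0 Un r' _ U0] by blast
    moreover have "all_paths (?f p) Ls'"
      unfolding all_paths_iff
    proof (intro allI impI)
      fix u v assume e: "path_edge Ls' u v"
      then have "pz v = Some u" "u \<in> U" "v \<in> U"
        using pz(2) path_edge_subset[OF e sub'] unfolding all_paths_iff by auto
      then show "?f p v = Some u" using root by (metis image_eqI regraft_inside)
    qed
    moreover have "all_paths (?f p) Ks"
      using p Ks r' unfolding all_paths_def is_path_def by (simp add: regraft_outside)
    ultimately show ?thesis using forests_iff_forest_on by blast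
  qed
  moreover have "inj_on ?f ?A"
  proof (rule inj_onI)
    fix p1 p2 assume "p1 \<in> ?A" "p2 \<in> ?A" "?f p1 = ?f p2"
    then show "p1 = p2" using path_child_parent_eq[of p1 Ls p2] cov regraft_inj[OF r'] by blast
  qed
  ultimately show ?thesis using finite_forests by (intro card_inj_on_le) auto
qed

lemma paths_agree_upwards:
  assumes "is_path p P" "is_path p Q" "i < length P" "j < length Q" "P ! i = Q ! j"
  shows "t \<le> i \<Longrightarrow> t \<le> j \<Longrightarrow> P ! (i - t) = Q ! (j - t)"
proof (induction t)
  case (Suc t)
  then have "Suc (i - Suc t) < length P" "Suc (j - Suc t) < length Q"
    "Suc (i - Suc t) = i - t" "Suc (j - Suc t) = j - t" using assms(3,4) by auto
  then show ?case using Suc assms(1,2) unfolding is_path_def by (metis Suc_leD option.inject)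
qed (use assms in simp)

lemma path_child_union:
  assumes "P \<in> set Ls" "Q \<in> set Ls" "Q ! 0 \<in> set P" "v \<in> set P \<union> set Q"
    "v \<noteq> P ! 0"
  shows "path_child Ls v"
proof (cases "v = Q ! 0")
  case True
  then show ?thesis using assms(1,3,5) path_childI by blast
next
  case False
  then show ?thesis using assms path_childI by (cases "v \<in> set P") blast+
qed

lemma union_paths_single_root:
  assumes "is_path p P" "is_path p Q" "set P \<inter> set Q \<noteq> {}"
  shows "\<exists>r\<in>set P \<union> set Q. \<forall>v\<in>(set P \<union> set Q) - {r}. path_child [P, Q] v"
proof -
  obtain i j where ij: "i < length P" "j < length Q" "P ! i = Q ! j"
    using assms(3) by (metis disjoint_iff in_set_conv_nth)
  show ?thesis
  proof (cases "j \<le> i")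
    case True
    then have "Q ! 0 = P ! (i - j)" using paths_agree_upwards[OF assms(1,2) ij, of j] by simp
    then have "Q ! 0 \<in> set P" using ij by simp
    moreover have "P ! 0 \<in> set P" using ij(1) by (cases P) auto
    ultimately show ?thesis using path_child_union[of P "[P, Q]" Q] by auto
  next
    case False
    then have "P ! 0 = Q ! (j - i)" using paths_agree_upwards[OF assms(1,2) ij, of i] by simp
    then have "P ! 0 \<in> set Q" using ij by simp
    moreover have "Q ! 0 \<in> set Q" using ij(2) by (cases Q) auto
    ultimately show ?thesis using path_child_union[of Q "[P, Q]" P] by auto
  qed
qed

definition forest_of_paths :: "nat list list \<Rightarrow> nat \<Rightarrow> nat option" where
  "forest_of_paths Ls v = (if path_child Ls v then Some (SOME u. path_edge Ls u v) else None)"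

lemma forest_of_paths:
  assumes sub: "\<forall>L\<in>set Ls. set L \<subseteq> {1..n}"
    and functional: "\<forall>u u' v. path_edge Ls u v \<longrightarrow> path_edge Ls u' v \<longrightarrow> u = u'"
    and rank: "\<forall>u v. path_edge Ls u v \<longrightarrow> (e::nat\<Rightarrow>nat) u < e v"
  shows "forest_of_paths Ls \<in> forests n" "all_paths (forest_of_paths Ls) Ls"
proof -
  have parent: "forest_of_paths Ls v = Some u \<longleftrightarrow> path_edge Ls u v" for u v
  proof
    assume "forest_of_paths Ls v = Some u"
    then have "path_child Ls v" "u = (SOME u. path_edge Ls u v)"
      unfolding forest_of_paths_def by (auto split: if_splits)
    then show "path_edge Ls u v"
      unfolding path_child_def using someI_ex[of "\<lambda>u. path_edge Ls u v"] by simp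
  next
    assume e: "path_edge Ls u v"
    then have "path_edge Ls (SOME u. path_edge Ls u v) v" by (rule someI)
    then have "(SOME u. path_edge Ls u v) = u" using functional e by blast
    moreover have "path_child Ls v" using e unfolding path_child_def by blast
    ultimately show "forest_of_paths Ls v = Some u" unfolding forest_of_paths_def by simp
  qed
  then show "all_paths (forest_of_paths Ls) Ls" unfolding all_paths_iff by blast
  have none: "\<forall>v. v \<notin> {1..n} \<longrightarrow> forest_of_paths Ls v = None"
  proof (intro allI impI)
    fix v assume v: "v \<notin> {1..n}"
    show "forest_of_paths Ls v = None"
    proof (cases "forest_of_paths Ls v")
      case (Some u)
      then have "path_edge Ls u v" using parent by blast
      then show ?thesis using path_edge_subset[OF _ sub] v by blast
    qed
  qed
  have closed: "\<forall>v u. forest_of_paths Ls v = Some u \<longrightarrow> u \<in> {1..n}"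
    using parent path_edge_subset[OF _ sub] by blast
  have ranked: "\<forall>v u. forest_of_paths Ls v = Some u \<longrightarrow> e u < e v"
    using parent rank by blast
  have "forest_on n (forest_of_paths Ls)"
    unfolding forest_on_def by (intro conjI none closed exI[of _ e] ranked)
  then show "forest_of_paths Ls \<in> forests n" by (simp add: forests_iff_forest_on)
qed

definition index_of :: "nat list \<Rightarrow> nat \<Rightarrow> nat" where
  "index_of L v = (LEAST j. L ! j = v)"

lemma index_of_nth:
  assumes "distinct L" "i < length L"
  shows "index_of L (L ! i) = i"
  unfolding index_of_def
proof (rule Least_equality)
  show "i \<le> y" if "L ! y = L ! i" for y
  proof (rule ccontr)
    assume "\<not> i \<le> y"
    then show False using that assms by (simp add: nth_eq_iff_index_eq)
  qed
qed simp

lemma path_edge_single: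
  "distinct L \<Longrightarrow> path_edge [L] u v \<longleftrightarrow> (\<exists>i. Suc i < length L \<and> u = L ! i \<and> v = L ! Suc i)"
  unfolding path_edge_def by simp

lemma exists_forest_path:
  assumes "distinct L" "set L \<subseteq> {1..n}"
  shows "\<exists>p\<in>forests n. is_path p L"
proof -
  have functional: "\<forall>u u' v. path_edge [L] u v \<longrightarrow> path_edge [L] u' v \<longrightarrow> u = u'"
  proof (intro allI impI)
    fix u u' v assume e: "path_edge [L] u v" "path_edge [L] u' v"
    obtain i where i: "Suc i < length L" "u = L ! i" "v = L ! Suc i"
      using e(1) unfolding path_edge_single[OF assms(1)] by blast
    obtain i' where i': "Suc i' < length L" "u' = L ! i'" "v = L ! Suc i'"
      using e(2) unfolding path_edge_single[OF assms(1)] by blast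
    have "Suc i = Suc i'" using i i' assms(1) by (simp add: nth_eq_iff_index_eq)
    then show "u = u'" using i i' by simp
  qed
  have rank: "\<forall>u v. path_edge [L] u v \<longrightarrow> index_of L u < index_of L v"
  proof (intro allI impI)
    fix u v assume e: "path_edge [L] u v"
    obtain i where "Suc i < length L" "u = L ! i" "v = L ! Suc i"
      using e unfolding path_edge_single[OF assms(1)] by blast
    then show "index_of L u < index_of L v" using assms(1) by (simp add: index_of_nth)
  qed
  have "\<forall>L'\<in>set [L]. set L' \<subseteq> {1..n}" using assms(2) by simp
  from forest_of_paths[OF this functional rank] show ?thesis unfolding all_paths_def by auto
qed

section \<open>Disjoint and overlapping pairs of copies\<close>

definition disjoint_pairs ::
  "nat list \<Rightarrow> nat \<Rightarrow> (nat list \<times> nat list) set" where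
  "disjoint_pairs pi n = {x \<in> copy_pairs pi n. set (fst x) \<inter> set (snd x) = {}}"

definition overlap_pairs ::
  "nat list \<Rightarrow> nat \<Rightarrow> nat set \<Rightarrow> (nat list \<times> nat list) set" where
  "overlap_pairs pi n U = {x \<in> copy_pairs pi n. set (fst x) \<inter> set (snd x) \<noteq> {} \<and>
      set (fst x) \<union> set (snd x) = U}"

definition linked_pairs ::
  "nat list \<Rightarrow> nat \<Rightarrow> nat set \<Rightarrow> (nat list \<times> nat list) set" where
  "linked_pairs pi n U = {x \<in> copy_pairs pi n. set (fst x) \<inter> set (snd x) \<noteq> {} \<and>
      set (fst x) \<union> set (snd x) = U \<and> 0 < joint_forests n (fst x) (snd x)}"

lemma joint_forests_commute: "joint_forests n P Q = joint_forests n Q P"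
  unfolding joint_forests_def by (simp add: conj_commute)

lemma joint_forests_pos_iff:
  "0 < joint_forests n P Q \<longleftrightarrow> (\<exists>p\<in>forests n. is_path p P \<and> is_path p Q)"
  unfolding joint_forests_def using finite_forests by (subst card_gt_0_iff) auto

lemma copy_pairsD:
  assumes "x \<in> copy_pairs pi n" "is_pattern pi"
  shows "order_iso pi (fst x)" "order_iso pi (snd x)" "set (fst x) \<subseteq> {1..n}"
    "set (snd x) \<subseteq> {1..n}" "fst x \<noteq> snd x" "distinct (fst x)" "distinct (snd x)"
  using assms order_iso_distinct unfolding copy_pairs_def copies_def by auto

lemma joint_forests_replace_path_le:
  assumes P': "distinct P'" "set P' = set P" and P: "P \<noteq> []" "set P \<subseteq> {1..n}"
    and disjoint: "set P \<inter> set K = {}"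
  shows "joint_forests n P K \<le> joint_forests n P' K"
proof -
  have "set P' \<subseteq> {1..n}" using P'(2) P(2) by simp
  then obtain p0 where p0: "p0 \<in> forests n" "is_path p0 P'"
    using exists_forest_path[OF P'(1)] by blast
  have "P' \<noteq> []" using P'(2) P(1) by auto
  have "card {p \<in> forests n. all_paths p [P] \<and> all_paths p [K]}
      \<le> card {p \<in> forests n. all_paths p [P'] \<and> all_paths p [K]}"
  proof (rule card_regraft_le[where r = "P ! 0" and r' = "P' ! 0"])
    show "P' ! 0 \<in> set P" using \<open>P' \<noteq> []\<close> P'(2)
      by (metis length_greater_0_conv nth_mem)
    show "\<forall>v\<in>set P - {P ! 0}. path_child [P] v" using path_childI[of P "[P]"] by simp
    show "\<forall>v\<in>set P - {P' ! 0}. path_child [P'] v"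
      using path_childI[of P' "[P']"] P'(2) by simp
    show "all_paths p0 [P']" using p0(2) unfolding all_paths_def by simp
    show "\<forall>L\<in>set [K]. \<forall>i. Suc i < length L \<longrightarrow> L ! Suc i \<notin> set P"
      using disjoint by (auto dest: nth_mem)
  qed (use P(2) P'(2) p0(1) in simp_all)
  then show ?thesis unfolding joint_forests_def all_paths_def by simp
qed

lemma joint_forests_disjoint_le:
  assumes P: "P \<noteq> []" "set P \<subseteq> {1..n}" and Q: "Q \<noteq> []"
    "set Q \<subseteq> {1..n}"
    and P': "distinct P'" "set P' = set P" and Q': "distinct Q'" "set Q' = set Q"
    and disjoint: "set P \<inter> set Q = {}"
  shows "joint_forests n P Q \<le> joint_forests n P' Q'"
proof -
  have "joint_forests n P Q \<le> joint_forests n P' Q"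
    by (rule joint_forests_replace_path_le[OF P' P disjoint])
  also have "\<dots> = joint_forests n Q P'" by (rule joint_forests_commute)
  also have "\<dots> \<le> joint_forests n Q' P'"
    using disjoint P'(2) by (intro joint_forests_replace_path_le[OF Q' Q]) auto
  also have "\<dots> = joint_forests n P' Q'" by (rule joint_forests_commute)
  finally show ?thesis .
qed

definition rearrange ::
  "nat list \<Rightarrow> nat list \<times> nat list \<Rightarrow> nat list \<times> nat list" where
  "rearrange pi x = (arrange pi (set (fst x)), arrange pi (set (snd x)))"

lemma arrange_arrange:
  assumes "is_pattern pi" "is_pattern pi'" "length pi = length pi'" "order_iso pi vs"
  shows "arrange pi (set (arrange pi' (set vs))) = vs"
  using assms order_iso_card_set[OF assms(4,1)]
  by (simp add: set_arrange order_iso_eq_arrange[symmetric])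

lemma rearrange_disjoint_pairs:
  assumes pat: "is_pattern pi" "is_pattern pi'" and len: "length pi = length pi'"
    and x: "x \<in> disjoint_pairs pi n"
  shows "rearrange pi' x \<in> disjoint_pairs pi' n"
    "joint_forests n (fst x) (snd x) \<le> joint_forests n (fst (rearrange pi' x)) (snd (rearrange pi' x))"
    "rearrange pi (rearrange pi' x) = x"
proof -
  let ?P = "arrange pi' (set (fst x))" and ?Q = "arrange pi' (set (snd x))"
  have xp: "x \<in> copy_pairs pi n" and disjoint: "set (fst x) \<inter> set (snd x) = {}"
    using x unfolding disjoint_pairs_def by auto
  note m = copy_pairsD[OF xp pat(1)]
  have card: "card (set (fst x)) = length pi'" "card (set (snd x)) = length pi'"
    using order_iso_card_set[OF m(1) pat(1)] order_iso_card_set[OF m(2) pat(1)] len by simp_all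
  have iso: "order_iso pi' ?P" "order_iso pi' ?Q"
    using order_iso_arrange[OF pat(2) finite_set] card by blast+
  have sets: "set ?P = set (fst x)" "set ?Q = set (snd x)"
    using set_arrange[OF pat(2) finite_set] card by blast+
  have "set (fst x) \<noteq> set (snd x)" using order_iso_unique[OF m(1) m(2) pat(1)] m(5) by blast
  then have "?P \<noteq> ?Q" using sets by metis
  then show "rearrange pi' x \<in> disjoint_pairs pi' n"
    unfolding rearrange_def disjoint_pairs_def copy_pairs_def copies_def
    using iso sets m(3,4) disjoint by simp
  have "fst x \<noteq> []" "snd x \<noteq> []"
    using m(5) order_iso_length[OF m(1)] order_iso_length[OF m(2)] by auto
  then have "joint_forests n (fst x) (snd x) \<le> joint_forests n ?P ?Q"
    using joint_forests_disjoint_le m(3,4) order_iso_distinct[OF iso(1) pat(2)]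
      order_iso_distinct[OF iso(2) pat(2)] sets disjoint by blast
  then show "joint_forests n (fst x) (snd x) \<le>
      joint_forests n (fst (rearrange pi' x)) (snd (rearrange pi' x))"
    unfolding rearrange_def by simp
  show "rearrange pi (rearrange pi' x) = x"
    unfolding rearrange_def using arrange_arrange[OF pat len] m(1,2) by (simp add: prod_eq_iff)
qed

lemma disjoint_pairs_sum_eq:
  assumes pat: "is_pattern pi" "is_pattern pi'" and len: "length pi = length pi'"
  shows "(\<Sum>x\<in>disjoint_pairs pi n. joint_forests n (fst x) (snd x)) =
    (\<Sum>x\<in>disjoint_pairs pi' n. joint_forests n (fst x) (snd x))"
proof -
  note fw = rearrange_disjoint_pairs[OF pat len]
    and bw = rearrange_disjoint_pairs[OF pat(2,1) len[symmetric]]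
  have bij: "bij_betw (rearrange pi') (disjoint_pairs pi n) (disjoint_pairs pi' n)"
    by (rule bij_betw_byWitness[where f' = "rearrange pi"]) (use fw bw in auto)
  have "joint_forests n (fst (rearrange pi' x)) (snd (rearrange pi' x)) = joint_forests n (fst x) (snd x)"
    if "x \<in> disjoint_pairs pi n" for x
    using fw(2)[OF that] bw(2)[OF fw(1)[OF that]] fw(3)[OF that] by simp
  then show ?thesis
    using sum.reindex_bij_betw[OF bij, of "\<lambda>y. joint_forests n (fst y) (snd y)"] by simp
qed

text \<open>For overlapping pairs that are realised at all, only the union of the vertex sets matters:
  the union is then a single tree.\<close>

lemma joint_forests_overlap_le:
  assumes U: "set P \<union> set Q = U" "set P' \<union> set Q' = U" "U \<subseteq> {1..n}"
    and overlap: "set P \<inter> set Q \<noteq> {}" "set P' \<inter> set Q' \<noteq> {}"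
    and pos: "0 < joint_forests n P Q" "0 < joint_forests n P' Q'"
  shows "joint_forests n P Q \<le> joint_forests n P' Q'"
proof -
  obtain p where p: "p \<in> forests n" "is_path p P" "is_path p Q"
    using pos(1) joint_forests_pos_iff by blast
  obtain p0 where p0: "p0 \<in> forests n" "is_path p0 P'" "is_path p0 Q'"
    using pos(2) joint_forests_pos_iff by blast
  obtain r where r: "\<forall>v\<in>U - {r}. path_child [P, Q] v"
    using union_paths_single_root[OF p(2,3) overlap(1)] U(1) by blast
  obtain r' where r': "r' \<in> U" "\<forall>v\<in>U - {r'}. path_child [P', Q'] v"
    using union_paths_single_root[OF p0(2,3) overlap(2)] U(2) by blast
  have "card {p \<in> forests n. all_paths p [P, Q] \<and> all_paths p []}
      \<le> card {p \<in> forests n. all_paths p [P', Q'] \<and> all_paths p []}"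
    by (rule card_regraft_le[OF U(3) r'(1) r _ p0(1) _ r'(2)])
      (use U p0 in \<open>auto simp: all_paths_def\<close>)
  then show ?thesis unfolding joint_forests_def all_paths_def by simp
qed

lemma overlap_pairs_sum:
  "(\<Sum>x\<in>overlap_pairs pi n U. joint_forests n (fst x) (snd x)) =
    (\<Sum>x\<in>linked_pairs pi n U. joint_forests n (fst x) (snd x))"
  using finite_copy_pairs
  by (intro sum.mono_neutral_right) (auto simp: overlap_pairs_def linked_pairs_def)

lemma overlap_pairs_sum_eq:
  assumes U: "U \<subseteq> {1..n}"
    and y: "y \<in> linked_pairs pi1 n U \<union> linked_pairs pi2 n U"
  shows "(\<Sum>x\<in>overlap_pairs pi n U. joint_forests n (fst x) (snd x)) =
    card (linked_pairs pi n U) * joint_forests n (fst y) (snd y)"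
proof -
  have y': "set (fst y) \<union> set (snd y) = U" "set (fst y) \<inter> set (snd y) \<noteq> {}"
    "0 < joint_forests n (fst y) (snd y)"
    using y unfolding linked_pairs_def by auto
  have "joint_forests n (fst x) (snd x) = joint_forests n (fst y) (snd y)"
    if "x \<in> linked_pairs pi n U" for x
  proof -
    have x': "set (fst x) \<union> set (snd x) = U" "set (fst x) \<inter> set (snd x) \<noteq> {}"
      "0 < joint_forests n (fst x) (snd x)"
      using that unfolding linked_pairs_def by auto
    show ?thesis using joint_forests_overlap_le[OF x'(1) y'(1) U x'(2) y'(2) x'(3) y'(3)]
        joint_forests_overlap_le[OF y'(1) x'(1) U y'(2) x'(2) y'(3) x'(3)] by simp
  qed
  then show ?thesis using overlap_pairs_sum by simp
qed

lemma pair_sum_split: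
  "pair_sum pi n = (\<Sum>x\<in>disjoint_pairs pi n. joint_forests n (fst x) (snd x)) +
    (\<Sum>U\<in>Pow {1..n}. \<Sum>x\<in>overlap_pairs pi n U. joint_forests n (fst x) (snd x))"
proof -
  let ?h = "\<lambda>x. joint_forests n (fst x) (snd x)"
  define overlapping where
    "overlapping = {x \<in> copy_pairs pi n. set (fst x) \<inter> set (snd x) \<noteq> {}}"
  have fin: "finite (disjoint_pairs pi n)" "finite overlapping"
    using finite_copy_pairs unfolding disjoint_pairs_def overlapping_def by simp_all
  have "pair_sum pi n = sum ?h (disjoint_pairs pi n) + sum ?h overlapping"
    unfolding pair_sum_def
    by (subst sum.union_disjoint[OF fin, symmetric])
      (auto simp: disjoint_pairs_def overlapping_def intro!: sum.cong)
  moreover have "sum ?h overlapping =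
      (\<Sum>U\<in>Pow {1..n}. sum ?h {x. x \<in> overlapping \<and> set (fst x) \<union> set (snd x) = U})"
    by (rule sum.group[symmetric, OF fin(2)])
      (auto simp: overlapping_def copy_pairs_def copies_def)
  moreover have "{x. x \<in> overlapping \<and> set (fst x) \<union> set (snd x) = U} = overlap_pairs pi n U" for U
    unfolding overlapping_def overlap_pairs_def by auto
  ultimately show ?thesis by simp
qed

lemma linked_pairs_map:
  assumes x: "x \<in> linked_pairs pi n V" and h: "strict_mono_on V h" and V: "V \<subseteq> {1..n}"
    and V': "h ` V = V'" "V' \<subseteq> {1..n'}"
  shows "(map h (fst x), map h (snd x)) \<in> linked_pairs pi n' V'"
proof -
  obtain P Q where PQ: "x = (P, Q)" by (cases x)
  have xm: "P \<in> copies pi n" "Q \<in> copies pi n" "P \<noteq> Q"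
    "set P \<inter> set Q \<noteq> {}"
    "set P \<union> set Q = V" "0 < joint_forests n P Q"
    using x PQ unfolding linked_pairs_def copy_pairs_def by auto
  have inj: "inj_on h V" using h strict_mono_on_imp_inj_on by blast
  have sub: "set P \<subseteq> V" "set Q \<subseteq> V" using xm(5) by auto
  have "strict_mono_on (set P) h" "strict_mono_on (set Q) h"
    using h sub by (auto simp: strict_mono_on_def)
  then have iso: "order_iso pi (map h P)" "order_iso pi (map h Q)"
    using xm(1,2) order_iso_map_strict_mono unfolding copies_def by blast+
  have "map h P \<noteq> map h Q" using xm(3,5) inj by (metis inj_on_map_eq_map)
  moreover have "set (map h P) \<inter> set (map h Q) \<noteq> {}" using xm(4) by auto
  moreover have "set (map h P) \<union> set (map h Q) = V'" using xm(5) V'(1) by auto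
  moreover obtain p where p: "p \<in> forests n" "is_path p P" "is_path p Q"
    using xm(6) joint_forests_pos_iff by blast
  then have "relabel V h p \<in> forests n'"
    using forest_on_relabel[OF _ inj] V' forests_iff_forest_on by blast
  then have "0 < joint_forests n' (map h P) (map h Q)"
    using is_path_relabel[OF p(2) sub(1) inj] is_path_relabel[OF p(3) sub(2) inj]
    by (auto simp: joint_forests_pos_iff)
  ultimately show ?thesis using PQ iso V'
    unfolding linked_pairs_def copy_pairs_def copies_def by auto
qed

lemma strict_mono_on_the_inv_into:
  fixes g :: "'a::linorder \<Rightarrow> 'b::linorder"
  assumes "strict_mono_on A g"
  shows "strict_mono_on (g ` A) (the_inv_into A g)"
proof (rule strict_mono_onI)
  fix y z assume "y \<in> g ` A" "z \<in> g ` A" "y < z"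
  then obtain a b where "a \<in> A" "b \<in> A" "y = g a" "z = g b" "g a < g b" by blast
  then show "the_inv_into A g y < the_inv_into A g z"
    using assms strict_mono_on_less[OF assms] strict_mono_on_imp_inj_on[OF assms]
    by (simp add: the_inv_into_f_f)
qed

lemma strict_mono_on_enumerate_set:
  assumes "finite U"
  shows "strict_mono_on {1..card U} (\<lambda>i. sorted_list_of_set U ! (i - 1))"
    "(\<lambda>i. sorted_list_of_set U ! (i - 1)) ` {1..card U} = U"
proof -
  let ?s = "sorted_list_of_set U"
  show "strict_mono_on {1..card U} (\<lambda>i. ?s ! (i - 1))"
  proof (rule strict_mono_onI)
    fix i j assume "i \<in> {1..card U}" "j \<in> {1..card U}" "i < j"
    then show "?s ! (i - 1) < ?s ! (j - 1)" using assms by (simp add: strict_sorted_nth_less_iff)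
  qed
  have "(\<lambda>i. ?s ! (i - 1)) ` {1..card U} = set ?s"
  proof
    show "(\<lambda>i. ?s ! (i - 1)) ` {1..card U} \<subseteq> set ?s"
    proof
      fix y assume "y \<in> (\<lambda>i. ?s ! (i - 1)) ` {1..card U}"
      then obtain i where "i \<in> {1..card U}" "y = ?s ! (i - 1)" by blast
      then show "y \<in> set ?s" using assms by (intro nth_mem[of
        "i - 1" ?s, folded \<open>y = _\<close>]) auto
    qed
    show "set ?s \<subseteq> (\<lambda>i. ?s ! (i - 1)) ` {1..card U}"
    proof
      fix y assume "y \<in> set ?s"
      then obtain a where "a < length ?s" "y = ?s ! a" by (metis in_set_conv_nth)
      then show "y \<in> (\<lambda>i. ?s ! (i - 1)) ` {1..card U}"
        using assms by (intro image_eqI[of _ _ "Suc a"]) auto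
    qed
  qed
  then show "(\<lambda>i. ?s ! (i - 1)) ` {1..card U} = U" using assms by simp
qed

lemma card_linked_pairs_relabel:
  assumes U: "U \<subseteq> {1..n}"
  shows "card (linked_pairs pi n U) = card (linked_pairs pi (card U) {1..card U})"
proof -
  define g where "g i = sorted_list_of_set U ! (i - 1)" for i
  define f where "f = the_inv_into {1..card U} g"
  have fin: "finite U" using U finite_subset by blast
  note g = strict_mono_on_enumerate_set[OF fin, folded g_def]
  have f: "strict_mono_on U f" "f ` U = {1..card U}"
    using strict_mono_on_the_inv_into[OF g(1)] the_inv_into_onto[OF strict_mono_on_imp_inj_on[OF g(1)]]
    unfolding f_def g(2) by simp_all
  have gf: "g (f a) = a" if "a \<in> U" for a
    using that f_the_inv_into_f[OF strict_mono_on_imp_inj_on[OF g(1)]] g(2) unfolding f_def by simp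
  have fg: "f (g i) = i" if "i \<in> {1..card U}" for i
    using that the_inv_into_f_f[OF strict_mono_on_imp_inj_on[OF g(1)]] unfolding f_def by simp
  let ?F = "\<lambda>x. (map f (fst x), map f (snd x))"
    and ?G = "\<lambda>x. (map g (fst x), map g (snd x))"
  have "bij_betw ?F (linked_pairs pi n U) (linked_pairs pi (card U) {1..card U})"
  proof (rule bij_betw_byWitness[where f' = ?G])
    show "\<forall>x\<in>linked_pairs pi n U. ?G (?F x) = x"
    proof
      fix x assume "x \<in> linked_pairs pi n U"
      then have "set (fst x) \<subseteq> U" "set (snd x) \<subseteq> U"
        unfolding linked_pairs_def by auto
      then show "?G (?F x) = x" using gf by (cases x) (auto simp: map_idI subset_iff)
    qed
    show "\<forall>x\<in>linked_pairs pi (card U) {1..card U}. ?F (?G x) = x"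
    proof
      fix x assume "x \<in> linked_pairs pi (card U) {1..card U}"
      then have "set (fst x) \<subseteq> {1..card U}" "set (snd x) \<subseteq> {1..card U}"
        unfolding linked_pairs_def by auto
      then show "?F (?G x) = x" using fg by (cases x) (auto simp: map_idI subset_iff)
    qed
    show "?F ` linked_pairs pi n U \<subseteq> linked_pairs pi (card U) {1..card U}"
      using linked_pairs_map[OF _ f(1) U f(2)] by auto
    show "?G ` linked_pairs pi (card U) {1..card U} \<subseteq> linked_pairs pi n U"
      using linked_pairs_map[OF _ g(1) _ g(2) U] by auto
  qed
  then show ?thesis by (rule bij_betw_same_card)
qed

text \<open>Equal second moments for all \<open>n\<close> force, by induction on the size of the union, equally
  many realisable overlapping pairs: a union \<open>U\<close> contributes \<open>card (linked_pairs pi n U)\<close> times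
  a weight independent of the pattern, and \<open>card (linked_pairs pi n U)\<close> depends only on
  \<open>card U\<close>.\<close>

lemma card_linked_pairs_eq:
  assumes pat: "is_pattern pi" "is_pattern pi'" and len: "length pi = length pi'"
    and pair_sum: "\<forall>n. pair_sum pi n = pair_sum pi' n"
  shows "card (linked_pairs pi u {1..u}) = card (linked_pairs pi' u {1..u})"
proof (induction u rule: less_induct)
  case (less u)
  let ?S = "\<lambda>s U. \<Sum>x\<in>overlap_pairs s u U. joint_forests u (fst x) (snd x)"
  have smaller: "?S pi U = ?S pi' U" if U: "U \<in> Pow {1..u} - {{1..u}}" for U
  proof -
    have Us: "U \<subseteq> {1..u}" using U by blast
    then have "card U < u" using U psubset_card_mono[of "{1..u}" U] by auto
    then have card_eq: "card (linked_pairs pi u U) = card (linked_pairs pi' u U)"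
      using card_linked_pairs_relabel[OF Us] less by metis
    show ?thesis
    proof (cases "linked_pairs pi u U \<union> linked_pairs pi' u U = {}")
      case True
      then show ?thesis
        using overlap_pairs_sum[where pi = pi and n = u and U = U]
          overlap_pairs_sum[where pi = pi' and n = u and U = U] by simp
    next
      case False
      then obtain y where y: "y \<in> linked_pairs pi u U \<union> linked_pairs pi' u U" by blast
      show ?thesis using overlap_pairs_sum_eq[OF Us y] card_eq by metis
    qed
  qed
  have "(\<Sum>U\<in>Pow {1..u}. ?S pi U) = (\<Sum>U\<in>Pow {1..u}. ?S pi' U)"
    using pair_sum pair_sum_split[of pi u] pair_sum_split[of pi' u] disjoint_pairs_sum_eq[OF pat len]
    by simp
  moreover have "(\<Sum>U\<in>Pow {1..u} - {{1..u}}. ?S pi U) = (\<Sum>U\<in>Pow {1..u} - {{1..u}}. ?S pi' U)"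
    using smaller by (rule sum.cong[OF refl])
  moreover have "(\<Sum>U\<in>Pow {1..u}. ?S s U) = ?S s {1..u} + (\<Sum>U\<in>Pow {1..u} - {{1..u}}. ?S s U)"
    for s by (rule sum.remove) simp_all
  ultimately have full: "?S pi {1..u} = ?S pi' {1..u}" by simp
  show ?case
  proof (cases "linked_pairs pi u {1..u} \<union> linked_pairs pi' u {1..u} = {}")
    case False
    then obtain y where y: "y \<in> linked_pairs pi u {1..u} \<union> linked_pairs pi' u {1..u}"
      by blast
    then have "0 < joint_forests u (fst y) (snd y)" unfolding linked_pairs_def by auto
    then show ?thesis using full overlap_pairs_sum_eq[OF _ y, of pi] overlap_pairs_sum_eq[OF _ y, of pi']
      by simp
  qed auto
qed

section \<open>Overlapping copies are aligned\<close>

definition aligned ::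
  "nat \<Rightarrow> nat \<Rightarrow> nat list \<Rightarrow> nat list \<Rightarrow> bool" where
  "aligned ov s P Q \<longleftrightarrow> (\<forall>j<ov. s + j < length P \<and> Q ! j = P ! (s + j)) \<and>
      (\<forall>j. ov \<le> j \<and> j < length Q \<longrightarrow> Q ! j \<notin> set P)"

lemma rank_path_less:
  assumes d: "\<forall>v u. p v = Some u \<longrightarrow> (d::nat\<Rightarrow>nat) u < d v"
    and c: "is_path p L"
  shows "a < b \<Longrightarrow> b < length L \<Longrightarrow> d (L ! a) < d (L ! b)"
proof (induction b)
  case 0 then show ?case by simp
next
  case (Suc b)
  have "p (L ! Suc b) = Some (L ! b)" using c Suc.prems unfolding is_path_def by blast
  then have "d (L ! b) < d (L ! Suc b)" using d by blast
  moreover have "a < b \<Longrightarrow> d (L ! a) < d (L ! b)" using Suc by simp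
  ultimately show ?case using Suc.prems by (cases "a = b") auto
qed

lemma downclosed_eq_lessThan:
  assumes "finite J" "\<forall>j\<in>J. \<forall>j'\<le>j. j' \<in> (J::nat set)"
  shows "J = {..<card J}"
proof -
  have "j < card J" if "j \<in> J" for j
  proof -
    have "{..j} \<subseteq> J" using assms(2) that by auto
    then have "card {..j} \<le> card J" using assms(1) card_mono by blast
    then show ?thesis by simp
  qed
  then have "J \<subseteq> {..<card J}" by auto
  then show ?thesis using card_subset_eq[of "{..<card J}" J] by simp
qed

text \<open>If \<open>Q\<close> starts at position \<open>s\<close> of \<open>P\<close>, then any vertex of \<open>Q\<close> on \<open>P\<close> lies exactly \<open>j\<close>
  steps below \<open>P ! s\<close>: otherwise climbing back from it along \<open>P\<close> would reach \<open>Q ! 0\<close> strictly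
  above the head of \<open>P\<close>.\<close>

lemma path_meets_path_at_shift:
  assumes F: "forest_on n p" and cP: "is_path p P" and cQ: "is_path p Q"
    and dP: "distinct P" and l: "length P = k" "length Q = k"
    and s: "s < k" and q0: "Q ! 0 = P ! s" and j: "j < k" "Q ! j \<in> set P"
  shows "s + j < k \<and> Q ! j = P ! (s + j)"
proof -
  obtain d :: "nat \<Rightarrow> nat" where d: "\<forall>v u. p v = Some u \<longrightarrow> d u < d v"
    using F unfolding forest_on_def by blast
  obtain i where i: "i < k" "Q ! j = P ! i" using j(2) l by (metis in_set_conv_nth)
  show ?thesis
  proof (cases "j \<le> i")
    case True
    have "P ! (i - j) = Q ! (j - j)"
      using paths_agree_upwards[OF cP cQ _ _ i(2)[symmetric], of j] i j l True by simp
    then have "P ! (i - j) = P ! s" using q0 by simp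
    then have "i - j = s" using dP i s l by (simp add: nth_eq_iff_index_eq)
    then show ?thesis using True i by auto
  next
    case False
    have e: "P ! (i - i) = Q ! (j - i)"
      using paths_agree_upwards[OF cP cQ _ _ i(2)[symmetric], of i] i j l False by simp
    have "d (Q ! 0) < d (Q ! (j - i))" using rank_path_less[OF d cQ, of 0 "j - i"] False j l by simp
    then have "d (Q ! 0) < d (P ! 0)" using e by simp
    moreover have "d (P ! 0) \<le> d (P ! s)"
      using rank_path_less[OF d cP, of 0 s] s l by (cases "s = 0") auto
    ultimately show ?thesis using q0 by simp
  qed
qed

lemma aligned_if_joint_forest:
  assumes F: "forest_on n p" and cP: "is_path p P" and cQ: "is_path p Q"
    and dP: "distinct P" and dQ: "distinct Q" and l: "length P = k" "length Q = k"
    and s: "s < k" and q0: "Q ! 0 = P ! s" and ov: "card (set P \<inter> set Q) = ov"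
  shows "aligned ov s P Q"
proof -
  note meet = path_meets_path_at_shift[OF F cP cQ dP l s q0]
  define J where "J = {j. j < k \<and> Q ! j \<in> set P}"
  have down: "\<forall>j\<in>J. \<forall>j'\<le>j. j' \<in> J"
  proof (intro ballI allI impI)
    fix j j' assume jJ: "j \<in> J" and jj: "j' \<le> j"
    then have j: "j < k" "Q ! j \<in> set P" unfolding J_def by auto
    have e: "s + j < k" "Q ! j = P ! (s + j)" using meet[OF j] by auto
    have "P ! (s + j - (j - j')) = Q ! (j - (j - j'))"
      using paths_agree_upwards[OF cP cQ _ _ e(2)[symmetric], of "j - j'"] e j l by simp
    then have "Q ! j' = P ! (s + j')" using jj by simp
    moreover have "s + j' < k" using e jj by simp
    ultimately show "j' \<in> J" unfolding J_def using jj j l by auto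
  qed
  have "card J = card {x \<in> set Q. x \<in> set P}"
    unfolding J_def using card_indices_filter[OF dQ, of "\<lambda>x. x \<in> set P"] l by simp
  also have "{x \<in> set Q. x \<in> set P} = set P \<inter> set Q" by auto
  finally have "card J = ov" using ov by simp
  moreover have "finite J" unfolding J_def by simp
  ultimately have J: "J = {..<ov}" using downclosed_eq_lessThan[OF _ down] by simp
  show ?thesis unfolding aligned_def
  proof (intro conjI allI impI)
    fix j assume "j < ov"
    then have "j \<in> J" using J by simp
    then have "j < k" "Q ! j \<in> set P" unfolding J_def by auto
    then show "s + j < length P" "Q ! j = P ! (s + j)" using meet l by auto
  next
    fix j assume j: "ov \<le> j \<and> j < length Q"
    then have "j \<notin> J" using J by simp
    then show "Q ! j \<notin> set P" using j l unfolding J_def by auto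
  qed
qed

lemma linked_pairs_aligned:
  assumes x: "x \<in> linked_pairs pi u {1..u}" and pat: "is_pattern pi" and k: "length pi = k"
    and uo: "u + ov = 2 * k"
  shows "(\<exists>s<k. aligned ov s (fst x) (snd x)) \<or> (\<exists>s<k. 0 < s \<and> aligned ov s (snd x) (fst x))"
proof -
  obtain P Q where PQ: "x = (P, Q)" by (cases x)
  have xp: "x \<in> copy_pairs pi u" and int: "set P \<inter> set Q \<noteq> {}"
    and un: "set P \<union> set Q = {1..u}"
    and ff: "0 < joint_forests u P Q" using x PQ unfolding linked_pairs_def by auto
  note m = copy_pairsD[OF xp pat]
  have dP: "distinct P" and dQ: "distinct Q" using m PQ by auto
  have lP: "length P = k" and lQ: "length Q = k" using m(1,2) PQ order_iso_length k by auto
  obtain p where p: "p \<in> forests u" "is_path p P" "is_path p Q"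
    using ff joint_forests_pos_iff by blast
  have F: "forest_on u p" using p forests_iff_forest_on by blast
  have co: "card (set P \<inter> set Q) = ov"
  proof -
    have "card (set P \<union> set Q) + card (set P \<inter> set Q) = card (set P) + card (set Q)"
      using card_Un_Int[of "set P" "set Q"] by simp
    then show ?thesis using un distinct_card[OF dP] distinct_card[OF dQ] lP lQ uo by simp
  qed
  obtain y where "y \<in> set P" "y \<in> set Q" using int by blast
  then obtain i j where ij: "i < k" "j < k" "P ! i = Q ! j" using lP lQ by (metis in_set_conv_nth)
  show ?thesis
  proof (cases "j \<le> i")
    case True
    have "P ! (i - j) = Q ! (j - j)"
      using paths_agree_upwards[OF p(2) p(3) _ _ ij(3), of j] ij lP lQ True by simp
    then have "Q ! 0 = P ! (i - j)" by simp
    then have "aligned ov (i - j) P Q"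
      using aligned_if_joint_forest[OF F p(2,3) dP dQ lP lQ _ _ co] ij by simp
    then show ?thesis using PQ ij by (intro disjI1) (rule exI[of _ "i - j"], simp)
  next
    case False
    have "P ! (i - i) = Q ! (j - i)"
      using paths_agree_upwards[OF p(2) p(3) _ _ ij(3), of i] ij lP lQ False by simp
    then have "P ! 0 = Q ! (j - i)" by simp
    moreover have co': "card (set Q \<inter> set P) = ov" using co by (simp add: Int_commute)
    ultimately have "aligned ov (j - i) Q P"
      using aligned_if_joint_forest[OF F p(3,2) dQ dP lQ lP _ _ co'] ij by simp
    then show ?thesis using PQ ij False by (intro disjI2) (rule exI[of _ "j - i"], simp)
  qed
qed

lemma aligned_joint_forest:
  assumes al: "aligned ov s P Q" and dP: "distinct P" and dQ: "distinct Q"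
    and l: "length P = k" "length Q = k" and sub: "set P \<subseteq> {1..n}"
      "set Q \<subseteq> {1..n}"
  shows "\<exists>p\<in>forests n. is_path p P \<and> is_path p Q"
proof -
  have on_P: "j < ov \<Longrightarrow> s + j < k \<and> Q ! j = P ! (s + j)" for j
    using al l unfolding aligned_def by auto
  have off_P: "j < ov" if "Q ! j \<in> set P" "j < k" for j
  proof (rule ccontr)
    assume "\<not> j < ov"
    then show False using that al l unfolding aligned_def by auto
  qed
  define e where "e v = (if v \<in> set P then index_of P v else s + index_of Q v)" for v
  define parent where
    "parent v = (if v \<in> set P then P ! (index_of P v - 1) else Q ! (index_of Q v - 1))" for v
  have eP: "i < k \<Longrightarrow> e (P ! i) = i" for i unfolding e_def
    using index_of_nth[OF dP] l by simp
  have eQ: "e (Q ! j) = s + j" if "j < k" for j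
  proof (cases "Q ! j \<in> set P")
    case True
    then show ?thesis using off_P[OF True that] on_P eP by simp
  next
    case False
    then show ?thesis unfolding e_def using index_of_nth[OF dQ] l that by simp
  qed
  have edge: "u = parent v \<and> e u < e v" if uv: "path_edge [P, Q] u v" for u v
  proof -
    from uv consider (P) i where "Suc i < k" "u = P ! i" "v = P ! Suc i"
      | (Q) j where "Suc j < k" "u = Q ! j" "v = Q ! Suc j"
      unfolding path_edge_def using l by auto
    then show ?thesis
    proof cases
      case P
      then show ?thesis using eP index_of_nth[OF dP] l unfolding parent_def by simp
    next
      case Q
      show ?thesis
      proof (cases "v \<in> set P")
        case True
        then have "Suc j < ov" using off_P Q by simp
        then have "v = P ! (s + Suc j)" "u = P ! (s + j)" "s + Suc j < k"
          using on_P[of "Suc j"] on_P[of j] Q by auto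
        then show ?thesis using True eP index_of_nth[OF dP] l unfolding parent_def by simp
      next
        case False
        then show ?thesis using Q eQ index_of_nth[OF dQ] l unfolding parent_def by simp
      qed
    qed
  qed
  have "\<forall>u u' v. path_edge [P, Q] u v \<longrightarrow> path_edge [P, Q] u' v \<longrightarrow> u = u'"
    using edge by metis
  moreover have "\<forall>u v. path_edge [P, Q] u v \<longrightarrow> e u < e v" using edge by blast
  moreover have "\<forall>L\<in>set [P, Q]. set L \<subseteq> {1..n}" using sub by simp
  ultimately show ?thesis using forest_of_paths[of "[P, Q]" n e] unfolding all_paths_def by auto
qed

section \<open>Counting aligned pairs\<close>

definition aligned_pairs ::
  "nat list \<Rightarrow> nat \<Rightarrow> nat \<Rightarrow> nat \<Rightarrow> (nat list \<times> nat list) set" where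
  "aligned_pairs pi u ov s = {x \<in> copies pi u \<times> copies pi u. set (fst x) \<union> set (snd x) = {1..u} \<and> aligned ov s (fst x) (snd x)}"

lemma finite_aligned_pairs: "finite (aligned_pairs pi u ov s)"
  unfolding aligned_pairs_def using finite_copies by auto

lemma aligned_pairsD:
  assumes "x \<in> aligned_pairs pi u ov s" "is_pattern pi" "length pi = k"
  shows "order_iso pi (fst x)" "order_iso pi (snd x)" "set (fst x) \<subseteq> {1..u}"
    "set (snd x) \<subseteq> {1..u}"
    "distinct (fst x)" "distinct (snd x)" "length (fst x) = k" "length (snd x) = k"
    "set (fst x) \<union> set (snd x) = {1..u}" "aligned ov s (fst x) (snd x)"
  using assms order_iso_distinct order_iso_length unfolding aligned_pairs_def copies_def by auto

lemma aligned_pairs_subset: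
  assumes pat: "is_pattern pi" and k: "length pi = k" and ov: "0 < ov" "ov < k"
  shows "aligned_pairs pi u ov s \<subseteq> linked_pairs pi u {1..u}"
proof
  fix x assume x: "x \<in> aligned_pairs pi u ov s"
  note m = aligned_pairsD[OF x pat k]
  have A1: "s + 0 < k \<and> snd x ! 0 = fst x ! (s + 0)" using m(10) ov m(7)
    unfolding aligned_def by auto
  have A2: "snd x ! ov \<notin> set (fst x)" using m(10) ov m(8) unfolding aligned_def by auto
  have ne: "fst x \<noteq> snd x"
  proof
    assume "fst x = snd x"
    then have "snd x ! ov \<in> set (fst x)" using ov m(8) by (metis nth_mem)
    then show False using A2 by simp
  qed
  have sh: "set (fst x) \<inter> set (snd x) \<noteq> {}"
  proof -
    have "snd x ! 0 \<in> set (snd x)" using ov m(8) by (intro nth_mem) simp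
    moreover have "snd x ! 0 \<in> set (fst x)" using A1 m(7) by (metis nth_mem)
    ultimately show ?thesis by blast
  qed
  have "\<exists>p\<in>forests u. is_path p (fst x) \<and> is_path p (snd x)"
    by (rule aligned_joint_forest[OF m(10) m(5,6,7,8,3,4)])
  then have "0 < joint_forests u (fst x) (snd x)" using joint_forests_pos_iff by blast
  then show "x \<in> linked_pairs pi u {1..u}" using x ne sh m(9)
    unfolding aligned_pairs_def linked_pairs_def copy_pairs_def by auto
qed

lemma linked_pairs_swap:
  assumes "x \<in> linked_pairs pi u U"
  shows "prod.swap x \<in> linked_pairs pi u U"
  using assms joint_forests_commute[of u "fst x" "snd x"]
  unfolding linked_pairs_def copy_pairs_def by auto

lemma linked_pairs_eq_Union:
  assumes pat: "is_pattern pi" and k: "length pi = k" and ov: "0 < ov" "ov < k"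
    and uo: "u + ov = 2 * k"
  shows "linked_pairs pi u {1..u} = (\<Union>s\<in>{..k - ov}. aligned_pairs pi u ov s) \<union>
    prod.swap ` (\<Union>s\<in>{1..k - ov}. aligned_pairs pi u ov s)"
    (is "_ = ?A \<union> ?B")
proof
  have shift_bound: "s \<le> k - ov" if "aligned ov s P Q" "length P = k" for s P Q
  proof -
    have "\<forall>j<ov. s + j < length P" using that(1) unfolding aligned_def by blast
    moreover have "ov - 1 < ov" using ov by simp
    ultimately have "s + (ov - 1) < length P" by blast
    then show ?thesis using that(2) by simp
  qed
  show "linked_pairs pi u {1..u} \<subseteq> ?A \<union> ?B"
  proof
    fix x assume x: "x \<in> linked_pairs pi u {1..u}"
    have xp: "x \<in> copy_pairs pi u" and un: "set (fst x) \<union> set (snd x) = {1..u}"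
      using x unfolding linked_pairs_def by auto
    note m = copy_pairsD[OF xp pat]
    have l: "length (fst x) = k" "length (snd x) = k" using m(1,2) order_iso_length k by auto
    consider s where "aligned ov s (fst x) (snd x)"
      | s where "0 < s" "aligned ov s (snd x) (fst x)"
      using linked_pairs_aligned[OF x pat k uo] by blast
    then show "x \<in> ?A \<union> ?B"
    proof cases
      case (1 s)
      then have "x \<in> aligned_pairs pi u ov s"
        using xp un unfolding aligned_pairs_def copy_pairs_def by auto
      then show ?thesis using shift_bound[OF 1 l(1)] by blast
    next
      case (2 s)
      then have "prod.swap x \<in> aligned_pairs pi u ov s"
        using xp un unfolding aligned_pairs_def copy_pairs_def by auto
      moreover have "s \<in> {1..k - ov}" using shift_bound[OF 2(2) l(2)] 2(1) by simp
      ultimately show ?thesis by (intro UnI2 image_eqI[of _ _ "prod.swap x"]) auto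
    qed
  qed
  show "?A \<union> ?B \<subseteq> linked_pairs pi u {1..u}"
    using aligned_pairs_subset[OF pat k ov] linked_pairs_swap by blast
qed

lemma aligned_pairs_disjoint:
  assumes pat: "is_pattern pi" and k: "length pi = k" and ov: "0 < ov"
    and x: "x \<in> aligned_pairs pi u ov s" "x \<in> aligned_pairs pi u ov s'"
  shows "s = s'"
proof -
  note m = aligned_pairsD[OF x(1) pat k] and m' = aligned_pairsD[OF x(2) pat k]
  have a: "s + 0 < k" "snd x ! 0 = fst x ! (s + 0)" using m(10) ov m(7) unfolding aligned_def
    by auto
  have b: "s' + 0 < k" "snd x ! 0 = fst x ! (s' + 0)" using m'(10) ov m(7) unfolding aligned_def
    by auto
  show ?thesis using a b m(5,7) by (simp add: nth_eq_iff_index_eq)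
qed

lemma aligned_pairs_swap_disjoint:
  assumes pat: "is_pattern pi" and k: "length pi = k" and ov: "0 < ov"
    and x: "x \<in> aligned_pairs pi u ov s" "prod.swap x \<in> aligned_pairs pi u ov s'"
    and s': "0 < s'"
  shows False
proof -
  note m = aligned_pairsD[OF x(1) pat k] and m' = aligned_pairsD[OF x(2) pat k]
  have b: "s' < k" "fst x ! 0 = snd x ! s'" using m'(10) ov m(8) unfolding aligned_def by auto
  have "fst x ! 0 \<in> set (fst x)" using b m(7) by (intro nth_mem) simp
  then have "snd x ! s' \<in> set (fst x)" using b by simp
  then have "s' < ov" using m(10) b m(8) unfolding aligned_def by (meson not_le)
  then have "snd x ! s' = fst x ! (s + s')" using m(10) unfolding aligned_def by auto
  moreover have "s + s' < k" using m(10) \<open>s' < ov\<close> m(7) unfolding aligned_def by auto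
  ultimately have "fst x ! 0 = fst x ! (s + s')" using b by simp
  then have "s + s' = 0" using m(5,7) \<open>s + s' < k\<close> by (simp add: nth_eq_iff_index_eq)
  then show False using s' by simp
qed

lemma card_UN_aligned_pairs:
  assumes pat: "is_pattern pi" and k: "length pi = k" and ov: "0 < ov" and S: "finite S"
  shows "card (\<Union>s\<in>S. aligned_pairs pi u ov s) = (\<Sum>s\<in>S. card (aligned_pairs pi u ov s))"
proof (rule card_UN_disjoint[OF S])
  show "\<forall>s\<in>S. finite (aligned_pairs pi u ov s)" by (simp add: finite_aligned_pairs)
  show "\<forall>s\<in>S. \<forall>s'\<in>S. s \<noteq> s' \<longrightarrow> aligned_pairs pi u ov s \<inter> aligned_pairs pi u ov s' = {}"
    using aligned_pairs_disjoint[OF pat k ov] by blast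
qed

lemma card_linked_pairs_full:
  assumes pat: "is_pattern pi" and k: "length pi = k" and ov: "0 < ov" "ov < k"
    and uo: "u + ov = 2 * k"
  shows "card (linked_pairs pi u {1..u}) = (\<Sum>s\<in>{..k - ov}. card (aligned_pairs pi u ov s)) +
    (\<Sum>s\<in>{1..k - ov}. card (aligned_pairs pi u ov s))"
proof -
  let ?A = "\<Union>s\<in>{..k - ov}. aligned_pairs pi u ov s"
    and ?B = "\<Union>s\<in>{1..k - ov}. aligned_pairs pi u ov s"
  have not_swapped: "prod.swap x \<notin> ?B" if x: "x \<in> ?A" for x
  proof
    assume "prod.swap x \<in> ?B"
    then obtain s' where s': "s' \<in> {1..k - ov}" "prod.swap x \<in> aligned_pairs pi u ov s'" by blast
    obtain s where "x \<in> aligned_pairs pi u ov s" using x by blast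
    moreover have "0 < s'" using s'(1) by simp
    ultimately show False using aligned_pairs_swap_disjoint[OF pat k ov(1) _ s'(2)] by blast
  qed
  have "?A \<inter> prod.swap ` ?B = {}"
  proof (intro equals0I)
    fix x assume "x \<in> ?A \<inter> prod.swap ` ?B"
    then obtain y where "x \<in> ?A" "y \<in> ?B" "x = prod.swap y" by blast
    then show False using not_swapped[of x] by simp
  qed
  moreover have "finite ?A" "finite (prod.swap ` ?B)" by (simp_all add: finite_aligned_pairs)
  ultimately have "card (linked_pairs pi u {1..u}) = card ?A + card (prod.swap ` ?B)"
    unfolding linked_pairs_eq_Union[OF pat k ov uo] by (rule card_Un_disjoint[rotated 2])
  also have "card (prod.swap ` ?B) = card ?B" by (simp add: card_image)
  finally show ?thesis by (simp add: card_UN_aligned_pairs[OF pat k ov(1)])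
qed

lemma aligned_pairs_Int:
  assumes x: "x \<in> aligned_pairs pi u ov s" and pat: "is_pattern pi" and k: "length pi = k"
  shows "set (fst x) \<inter> set (snd x) = (\<lambda>j. fst x ! (s + j)) ` {..<ov}"
proof -
  note m = aligned_pairsD[OF x pat k]
  have A1: "\<And>j. j < ov \<Longrightarrow> s + j < k \<and> snd x ! j = fst x ! (s + j)"
    using m(10) m(7) unfolding aligned_def by auto
  have A2: "\<And>j. ov \<le> j \<Longrightarrow> j < k \<Longrightarrow> snd x ! j \<notin> set (fst x)" using m(10) m(8) unfolding aligned_def by auto
  show ?thesis
  proof
    show "set (fst x) \<inter> set (snd x) \<subseteq> (\<lambda>j. fst x ! (s + j)) ` {..<ov}"
    proof
      fix z assume z: "z \<in> set (fst x) \<inter> set (snd x)"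
      then obtain j where j: "j < k" "z = snd x ! j" using m(8) by (metis IntD2 in_set_conv_nth)
      have "j < ov" using A2[of j] j z by (meson IntD1 not_le)
      then show "z \<in> (\<lambda>j. fst x ! (s + j)) ` {..<ov}" using A1 j by auto
    qed
  next
    show "(\<lambda>j. fst x ! (s + j)) ` {..<ov} \<subseteq> set (fst x) \<inter> set (snd x)"
    proof
      fix z assume "z \<in> (\<lambda>j. fst x ! (s + j)) ` {..<ov}"
      then obtain j where j: "j < ov" "z = fst x ! (s + j)" by blast
      have a: "s + j < k" "snd x ! j = fst x ! (s + j)" using A1[OF j(1)] by auto
      have "j < k" using a by simp
      then have "snd x ! j \<in> set (snd x)" using m(8) by simp
      moreover have "fst x ! (s + j) \<in> set (fst x)" using a m(7) by simp
      ultimately show "z \<in> set (fst x) \<inter> set (snd x)" using a j by simp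
    qed
  qed
qed

lemma aligned_pairs_Diff:
  assumes x: "x \<in> aligned_pairs pi u ov s" and pat: "is_pattern pi" and k: "length pi = k"
  shows "set (snd x) - set (fst x) = (\<lambda>j. snd x ! j) ` {ov..<k}"
proof -
  note m = aligned_pairsD[OF x pat k]
  have A1: "\<And>j. j < ov \<Longrightarrow> s + j < k \<and> snd x ! j = fst x ! (s + j)"
    using m(10) m(7) unfolding aligned_def by auto
  have A2: "\<And>j. ov \<le> j \<Longrightarrow> j < k \<Longrightarrow> snd x ! j \<notin> set (fst x)" using m(10) m(8) unfolding aligned_def by auto
  show ?thesis
  proof
    show "set (snd x) - set (fst x) \<subseteq> (\<lambda>j. snd x ! j) ` {ov..<k}"
    proof
      fix z assume z: "z \<in> set (snd x) - set (fst x)"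
      then obtain j where j: "j < k" "z = snd x ! j" using m(8) by (metis DiffD1 in_set_conv_nth)
      have "\<not> j < ov"
      proof
        assume "j < ov"
        then have "z = fst x ! (s + j)" "s + j < k" using A1 j by auto
        then have "z \<in> set (fst x)" using m(7) by simp
        then show False using z by simp
      qed
      then show "z \<in> (\<lambda>j. snd x ! j) ` {ov..<k}" using j by auto
    qed
  next
    show "(\<lambda>j. snd x ! j) ` {ov..<k} \<subseteq> set (snd x) - set (fst x)"
    proof
      fix z assume "z \<in> (\<lambda>j. snd x ! j) ` {ov..<k}"
      then obtain j where j: "ov \<le> j" "j < k" "z = snd x ! j" by auto
      then show "z \<in> set (snd x) - set (fst x)" using A2[OF j(1,2)] m(8) by simp
    qed
  qed
qed

lemma card_aligned_pairs_Diff: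
  assumes x: "x \<in> aligned_pairs pi u ov s" and pat: "is_pattern pi" and k: "length pi = k"
  shows "card (set (snd x) - set (fst x)) = k - ov"
proof -
  note m = aligned_pairsD[OF x pat k]
  have "inj_on (\<lambda>j. snd x ! j) {ov..<k}"
    using nth_eq_iff_index_eq[OF m(6)] m(8) by (auto simp: inj_on_def)
  then show ?thesis using aligned_pairs_Diff[OF x pat k] card_image by fastforce
qed

lemma aligned_pairs_fst_set:
  assumes x: "x \<in> aligned_pairs pi u ov s" and pat: "is_pattern pi" and k: "length pi = k"
  shows "set (fst x) = {1..u} - (set (snd x) - set (fst x))"
  using aligned_pairsD(9)[OF x pat k] by blast

lemma aligned_pairs_snd_set:
  assumes x: "x \<in> aligned_pairs pi u ov s" and pat: "is_pattern pi" and k: "length pi = k"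
  shows "set (snd x) = (\<lambda>j. fst x ! (s + j)) ` {..<ov} \<union> (set (snd x) - set (fst x))"
  using aligned_pairs_Int[OF x pat k] by blast

lemma aligned_pairs_inj:
  assumes x: "x \<in> aligned_pairs pi u ov s" and y: "y \<in> aligned_pairs pi u ov s"
    and pat: "is_pattern pi" and k: "length pi = k"
    and e: "set (snd x) - set (fst x) = set (snd y) - set (fst y)"
  shows "x = y"
proof -
  note mx = aligned_pairsD[OF x pat k] and my = aligned_pairsD[OF y pat k]
  have "set (fst x) = set (fst y)"
    using aligned_pairs_fst_set[OF x pat k] aligned_pairs_fst_set[OF y pat k] e by simp
  then have f: "fst x = fst y" using order_iso_unique[OF mx(1) my(1) pat] by simp
  have "set (snd x) = set (snd y)"
    using aligned_pairs_snd_set[OF x pat k] aligned_pairs_snd_set[OF y pat k] e f by simp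
  then have "snd x = snd y" using order_iso_unique[OF mx(2) my(2) pat] by simp
  then show ?thesis using f by (simp add: prod_eq_iff)
qed

lemma aligned_pairs_window:
  assumes x: "x \<in> aligned_pairs pi u ov s" and pat: "is_pattern pi" and k: "length pi = k"
    and j: "j < ov" "j' < ov"
  shows "pi ! j < pi ! j' \<longleftrightarrow> pi ! (s + j) < pi ! (s + j')"
proof -
  note m = aligned_pairsD[OF x pat k]
  have A1: "\<And>j. j < ov \<Longrightarrow> s + j < k \<and> snd x ! j = fst x ! (s + j)"
    using m(10) m(7) unfolding aligned_def by auto
  have a: "s + j < k" "snd x ! j = fst x ! (s + j)" "s + j' < k" "snd x ! j' = fst x ! (s + j')"
    using A1[OF j(1)] A1[OF j(2)] by auto
  have jk: "j < k" "j' < k" using a by auto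
  have "pi ! j < pi ! j' \<longleftrightarrow> snd x ! j < snd x ! j'"
    using order_iso_less_iff[OF m(2)] jk k by simp
  also have "\<dots> \<longleftrightarrow> fst x ! (s + j) < fst x ! (s + j')" using a by simp
  also have "\<dots> \<longleftrightarrow> pi ! (s + j) < pi ! (s + j')"
    using order_iso_less_iff[OF m(1)] a k by simp
  finally show ?thesis .
qed

lemma card_below:
  assumes "y \<in> {1..(u::nat)}"
  shows "card {z \<in> {1..u}. z < y} = y - 1"
proof -
  have "{z \<in> {1..u}. z < y} = {1..<y}" using assms by auto
  then show ?thesis by simp
qed

lemma card_atmost_in:
  assumes "y \<in> {1..(u::nat)}"
  shows "card {z \<in> {1..u}. z \<le> y} = y"
proof -
  have "{z \<in> {1..u}. z \<le> y} = {1..y}" using assms by auto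
  then show ?thesis by simp
qed

lemma card_image_nth_filter:
  assumes "distinct Q" "A \<subseteq> {..<length Q}"
  shows "card {z \<in> (\<lambda>t. Q ! t) ` A. Pr z} = card {t \<in> A. Pr (Q ! t)}"
proof -
  have "{z \<in> (\<lambda>t. Q ! t) ` A. Pr z} = (\<lambda>t. Q ! t) ` {t \<in> A. Pr (Q ! t)}"
    by auto
  moreover have "inj_on (\<lambda>t. Q ! t) {t \<in> A. Pr (Q ! t)}"
  proof (rule inj_onI)
    fix a b assume "a \<in> {t \<in> A. Pr (Q ! t)}" "b \<in> {t \<in> A. Pr (Q ! t)}"
      "Q ! a = Q ! b"
    then show "a = b" using nth_eq_iff_index_eq[OF assms(1)] assms(2) by blast
  qed
  ultimately show ?thesis using card_image by metis
qed

lemma prefix_less_nth: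
  assumes pat: "is_pattern pi" and k: "length pi = k" and pref: "\<forall>j<ov. pi ! j = Suc j"
    and t: "ov \<le> t" "t < k"
  shows "ov < pi ! t"
proof (rule ccontr)
  assume "\<not> ov < pi ! t"
  then have le: "pi ! t \<le> ov" by simp
  have r: "pi ! t \<in> {1..k}" using is_pattern_nth[OF pat] t k by simp
  define j where "j = pi ! t - 1"
  have j: "j < ov" "Suc j = pi ! t" using le r unfolding j_def by auto
  then have "pi ! j = pi ! t" using pref by simp
  moreover have "j < k" using j t by simp
  ultimately have "j = t" using nth_eq_iff_index_eq[OF is_pattern_distinct[OF pat]] t k by simp
  then show False using j t by simp
qed

lemma ascending_run_mono:
  fixes pi :: "nat list"
  assumes run: "\<forall>t. s \<le> t \<longrightarrow> Suc t < s + ov \<longrightarrow> pi ! t < pi ! Suc t"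
  shows "j < j' \<Longrightarrow> j' < ov \<Longrightarrow> pi ! (s + j) < pi ! (s + j')"
proof (induction j')
  case 0 then show ?case by simp
next
  case (Suc j')
  have st: "pi ! (s + j') < pi ! Suc (s + j')" using run Suc.prems by simp
  show ?case
  proof (cases "j = j'")
    case True then show ?thesis using st by simp
  next
    case False
    then have "pi ! (s + j) < pi ! (s + j')" using Suc by simp
    then have "pi ! (s + j) < pi ! Suc (s + j')" using st by linarith
    then show ?thesis by simp
  qed
qed

lemma nth_arrange_prefix:
  assumes pat: "is_pattern pi" and fin: "finite Y" and card: "card Y = length pi"
    and pref: "\<forall>j<m. pi ! j = Suc j" and m: "m \<le> length pi"
    and mono: "strict_mono_on {..<m} c" and C: "c ` {..<m} \<subseteq> Y"
    and above: "\<forall>z\<in>Y - c ` {..<m}. \<forall>j<m. c j < z"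
    and j: "j < m"
  shows "arrange pi Y ! j = c j"
proof (rule eq_if_rank_eq[OF fin])
  have "{z \<in> Y. z < c j} = c ` {..<j}"
  proof
    show "{z \<in> Y. z < c j} \<subseteq> c ` {..<j}"
    proof
      fix z assume z: "z \<in> {z \<in> Y. z < c j}"
      have "z \<in> c ` {..<m}"
      proof (rule ccontr)
        assume "z \<notin> c ` {..<m}"
        then have "c j < z" using above z j by blast
        then show False using z by simp
      qed
      then obtain j' where "j' < m" "z = c j'" by blast
      moreover have "\<not> j \<le> j'"
        using z calculation strict_mono_on_less_eq[OF mono, of j j'] j by auto
      ultimately show "z \<in> c ` {..<j}" by auto
    qed
    show "c ` {..<j} \<subseteq> {z \<in> Y. z < c j}"
      using C j strict_mono_onD[OF mono] by auto
  qed
  moreover have "inj_on c {..<j}"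
    using strict_mono_on_imp_inj_on[OF mono] j by (auto intro: inj_on_subset)
  ultimately have "card {z \<in> Y. z < c j} = j" by (simp add: card_image)
  moreover have "card {z \<in> Y. z < arrange pi Y ! j} = j"
    using order_iso_rank[OF order_iso_arrange[OF pat fin card] pat] set_arrange[OF pat fin card]
      pref j m by simp
  ultimately show "card {z \<in> Y. z < arrange pi Y ! j} = card {z \<in> Y. z < c j}" by simp
  show "arrange pi Y ! j \<in> Y"
    using set_arrange[OF pat fin card] j m nth_mem[of j "arrange pi Y"]
      by (simp add: length_arrange)
  show "c j \<in> Y" using C j by auto
qed

text \<open>When \<open>pi\<close> starts with \<open>1 \<dots> ov\<close> and ascends on the window \<open>s \<dots> s + ov - 1\<close>,
  a pair aligned with shift \<open>s\<close> and union \<open>{1..u}\<close> is determined by the \<open>k - ov\<close> vertices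
  of its second path off the first, and these can be any \<open>k - ov\<close> vertices above
  \<open>pi ! (s + ov - 1)\<close>.\<close>

context
  fixes pi :: "nat list" and k u ov s :: nat
  assumes pat: "is_pattern pi" and k: "length pi = k" and ov: "0 < ov" "ov < k"
    and uo: "u + ov = 2 * k" and pref: "\<forall>j<ov. pi ! j = Suc j"
    and run: "\<forall>t. s \<le> t \<longrightarrow> Suc t < s + ov \<longrightarrow> pi ! t < pi ! Suc t"
    and sk: "s + ov \<le> k"
begin

lemma aligned_pair_new_vertices:
  assumes x: "x \<in> aligned_pairs pi u ov s"
  shows "set (snd x) - set (fst x) \<subseteq> {Suc (pi ! (s + ov - 1))..u}"
    "card (set (snd x) - set (fst x)) = k - ov"
proof -
  note m = aligned_pairsD[OF x pat k]
  let ?P = "fst x" and ?Q = "snd x" and ?R = "set (snd x) - set (fst x)"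
  have R: "?R = (\<lambda>j. ?Q ! j) ` {ov..<k}" using aligned_pairs_Diff[OF x pat k] .
  show "card ?R = k - ov" by (rule card_aligned_pairs_Diff[OF x pat k])
  have on_P: "j < ov \<Longrightarrow> s + j < k \<and> ?Q ! j = ?P ! (s + j)" for j
    using m(10) m(7) unfolding aligned_def by auto
  define y where "y = ?P ! (s + ov - 1)"
  have y3: "s + ov - 1 < k" using sk ov by simp
  then have "y \<in> set ?P" unfolding y_def using m(7) by simp
  then have y: "?Q ! (ov - 1) = y" "y \<in> {1..u}" "s + ov - 1 < k"
    using on_P[of "ov - 1"] ov m(3) y3 unfolding y_def by auto
  have big: "y < z" if z: "z \<in> ?R" for z
  proof -
    obtain j where j: "ov \<le> j" "j < k" "z = ?Q ! j" using z R by auto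
    have "pi ! (ov - 1) < pi ! j" using pref ov prefix_less_nth[OF pat k pref j(1,2)] by simp
    then have "?Q ! (ov - 1) < ?Q ! j" using order_iso_less_iff[OF m(2), of "ov - 1" j] j ov k
      by simp
    then show "y < z" using j y(1) by simp
  qed
  have "{z \<in> {1..u}. z < y} = {z \<in> set ?P. z < y}" using big m(3) m(9) by fastforce
  then have "y - 1 = pi ! (s + ov - 1) - 1"
    using card_below[OF y(2)] order_iso_rank[OF m(1) pat] y(3) k unfolding y_def by simp
  moreover have "1 \<le> pi ! (s + ov - 1)" using is_pattern_nth[OF pat] y(3) k by fastforce
  moreover have "1 \<le> y" using y(2) by simp
  ultimately have "y = pi ! (s + ov - 1)" by arith
  then show "?R \<subseteq> {Suc (pi ! (s + ov - 1))..u}" using big m(4) by fastforce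
qed

lemma arrange_complement_window:
  fixes R :: "nat set"
  defines "P \<equiv> arrange pi ({1..u} - R)"
  assumes R: "R \<subseteq> {Suc (pi ! (s + ov - 1))..u}" "card R = k - ov"
  shows "strict_mono_on {..<ov} (\<lambda>j. P ! (s + j))"
    "\<And>j. j < ov \<Longrightarrow> P ! (s + j) \<le> pi ! (s + ov - 1)"
    "set P = {1..u} - R" "order_iso pi P"
proof -
  let ?w = "pi ! (s + ov - 1)" and ?X = "{1..u} - R"
  have window: "s + ov - 1 < k" using sk ov by simp
  then have w: "?w \<in> {1..k}" using is_pattern_nth[OF pat] k by simp
  have fin: "finite R" using R(1) finite_subset by blast
  have "R \<subseteq> {1..u}" using R(1) by auto
  then have card: "card ?X = length pi" using card_Diff_subset[OF fin] R(2) uo ov k by simp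
  show set: "set P = ?X" and iso: "order_iso pi P"
    unfolding P_def using set_arrange[OF pat _ card] order_iso_arrange[OF pat _ card] by simp_all
  show mono: "strict_mono_on {..<ov} (\<lambda>j. P ! (s + j))"
  proof (rule strict_mono_onI)
    fix j j' assume "j \<in> {..<ov}" "j' \<in> {..<ov}" "j < j'"
    then have "pi ! (s + j) < pi ! (s + j')" "s + j < k" "s + j' < k"
      using ascending_run_mono[OF run] sk by auto
    then show "P ! (s + j) < P ! (s + j')" using order_iso_less_iff[OF iso] k by simp
  qed
  have below: "{z \<in> ?X. z < ?w} = {1..<?w}" using R(1) w uo ov by auto
  have Pw: "P ! (s + ov - 1) = ?w"
  proof (rule eq_if_rank_eq[of ?X])
    show "finite ?X" "?w \<in> ?X" using w R(1) uo ov by auto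
    show "P ! (s + ov - 1) \<in> ?X"
      using set order_iso_length[OF iso] window k nth_mem[of "s + ov - 1" P] by simp
    have "card {z \<in> ?X. z < P ! (s + ov - 1)} = ?w - 1"
      using order_iso_rank[OF iso pat] window k set by simp
    then show "card {z \<in> ?X. z < P ! (s + ov - 1)} = card {z \<in> ?X. z < ?w}"
      unfolding below by simp
  qed
  show "P ! (s + j) \<le> ?w" if j: "j < ov" for j
  proof (cases "j = ov - 1")
    case True
    then show ?thesis using Pw ov by simp
  next
    case False
    then have "P ! (s + j) < P ! (s + (ov - 1))" using strict_mono_onD[OF mono, of j "ov - 1"] j
      by simp
    moreover have "s + (ov - 1) = s + ov - 1" using ov by simp
    ultimately show ?thesis using Pw by simp
  qed
qed

lemma aligned_pair_with_new_vertices: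
  assumes R: "R \<subseteq> {Suc (pi ! (s + ov - 1))..u}" "card R = k - ov"
  shows "\<exists>x\<in>aligned_pairs pi u ov s. set (snd x) - set (fst x) = R"
proof -
  define P where "P = arrange pi ({1..u} - R)"
  note window = arrange_complement_window[OF R, folded P_def]
  have lP: "length P = k" using order_iso_length[OF window(4)] k by simp
  define C where "C = (\<lambda>j. P ! (s + j)) ` {..<ov}"
  have CP: "C \<subseteq> set P" unfolding C_def using lP sk by auto
  have "card C = ov"
    unfolding C_def using card_image[OF strict_mono_on_imp_inj_on[OF window(1)]] by simp
  moreover have "C \<inter> R = {}" using CP window(3) by blast
  moreover have fin: "finite R" using R(1) finite_subset by blast
  ultimately have card: "card (C \<union> R) = length pi"
    using card_Un_disjoint[of C R] R(2) ov k unfolding C_def by simp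
  have fin': "finite (C \<union> R)" using fin unfolding C_def by simp
  define Q where "Q = arrange pi (C \<union> R)"
  have setQ: "set Q = C \<union> R" and isoQ: "order_iso pi Q" and lQ: "length Q = k"
    unfolding Q_def using set_arrange[OF pat fin' card] order_iso_arrange[OF pat fin' card] k
    by (simp_all add: length_arrange)
  have on_P: "Q ! j = P ! (s + j)" if "j < ov" for j
    unfolding Q_def
  proof (rule nth_arrange_prefix[OF pat fin' card pref _ window(1) _ _ that])
    show "\<forall>z\<in>C \<union> R - (\<lambda>j. P ! (s + j)) ` {..<ov}. \<forall>j<ov. P ! (s + j) < z"
      using window(2) R(1) unfolding C_def by fastforce
  qed (use ov k C_def in auto)
  have off_P: "Q ! j \<notin> set P" if "ov \<le> j" "j < k" for j
  proof
    assume "Q ! j \<in> set P"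
    then have "Q ! j \<in> C" using setQ window(3) that lQ nth_mem[of j Q] by auto
    then obtain j' where "j' < ov" "Q ! j = Q ! j'" using on_P unfolding C_def by auto
    then show False using nth_eq_iff_index_eq[OF order_iso_distinct[OF isoQ pat]] that lQ ov by simp
  qed
  have "aligned ov s P Q" unfolding aligned_def using on_P off_P lP lQ sk by auto
  moreover have "set P \<union> set Q = {1..u}" using setQ window(3) CP R(1) by auto
  moreover have "set Q \<subseteq> {1..u}" using setQ CP window(3) R(1) by auto
  ultimately have "(P, Q) \<in> aligned_pairs pi u ov s"
    unfolding aligned_pairs_def copies_def using window(3,4) isoQ by auto
  moreover have "set Q - set P = R" using setQ window(3) CP R(1) by auto
  ultimately show ?thesis by force
qed

lemma card_aligned_pairs:
  "card (aligned_pairs pi u ov s) = (u - pi ! (s + ov - 1)) choose (k - ov)"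
proof -
  let ?f = "\<lambda>x. set (snd x) - set (fst x)"
  let ?new = "{R. R \<subseteq> {Suc (pi ! (s + ov - 1))..u} \<and> card R = k - ov}"
  have "bij_betw ?f (aligned_pairs pi u ov s) ?new"
    unfolding bij_betw_def
  proof
    show "inj_on ?f (aligned_pairs pi u ov s)"
    proof (rule inj_onI)
      fix x y assume "x \<in> aligned_pairs pi u ov s"
        "y \<in> aligned_pairs pi u ov s" "?f x = ?f y"
      then show "x = y" by (rule aligned_pairs_inj[OF _ _ pat k])
    qed
    show "?f ` aligned_pairs pi u ov s = ?new"
    proof
      show "?f ` aligned_pairs pi u ov s \<subseteq> ?new" using aligned_pair_new_vertices by blast
      show "?new \<subseteq> ?f ` aligned_pairs pi u ov s"
      proof
        fix R assume "R \<in> ?new"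
        then obtain x where "x \<in> aligned_pairs pi u ov s" "?f x = R"
          using aligned_pair_with_new_vertices by blast
        then show "R \<in> ?f ` aligned_pairs pi u ov s" by blast
      qed
    qed
  qed
  then have "card (aligned_pairs pi u ov s) = card ?new" by (rule bij_betw_same_card)
  also have "\<dots> = card {Suc (pi ! (s + ov - 1))..u} choose (k - ov)" by (rule n_subsets) simp
  finally show ?thesis by simp
qed

end

lemma aligned_pairs_0_nth:
  assumes x: "x \<in> aligned_pairs pi u ov 0" and pat: "is_pattern pi" and k: "length pi = k"
    and j: "j < ov"
  shows "fst x ! j = card {i. i < k \<and> pi ! i \<le> pi ! j} + card {t. ov \<le> t \<and> t < k \<and> pi ! t \<le> pi ! j}"
proof -
  note m = aligned_pairsD[OF x pat k]
  let ?P = "fst x" and ?Q = "snd x"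
  have A1: "\<And>j. j < ov \<Longrightarrow> 0 + j < k \<and> ?Q ! j = ?P ! (0 + j)"
    using m(10) m(7) unfolding aligned_def by auto
  have jk: "j < k" and qp: "?Q ! j = ?P ! j" using A1[OF j] by auto
  define R where "R = set ?Q - set ?P"
  have RR: "R = (\<lambda>t. ?Q ! t) ` {ov..<k}" unfolding R_def
    using aligned_pairs_Diff[OF x pat k] .
  have yu: "?P ! j \<in> {1..u}" using m(3) m(7) jk nth_mem by blast
  have e: "{z \<in> {1..u}. z \<le> ?P ! j} = {z \<in> set ?P. z \<le> ?P ! j} \<union> {z \<in> R. z \<le> ?P ! j}"
    using m(9) m(3) unfolding R_def by blast
  have dj: "{z \<in> set ?P. z \<le> ?P ! j} \<inter> {z \<in> R. z \<le> ?P ! j} = {}"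
    unfolding R_def by blast
  have fin: "finite {z \<in> set ?P. z \<le> ?P ! j}" "finite {z \<in> R. z \<le> ?P ! j}"
    unfolding R_def by auto
  have c1: "card {z \<in> set ?P. z \<le> ?P ! j} = card {i. i < k \<and> pi ! i \<le> pi ! j}"
    using order_iso_card_le[OF m(1) pat] jk k by simp
  have c2: "card {z \<in> R. z \<le> ?P ! j} = card {t. ov \<le> t \<and> t < k \<and> pi ! t \<le> pi ! j}"
  proof -
    have "card {z \<in> R. z \<le> ?P ! j} = card {t \<in> {ov..<k}. ?Q ! t \<le> ?P ! j}"
      unfolding RR by (rule card_image_nth_filter[OF m(6)]) (use m(8) in auto)
    also have "{t \<in> {ov..<k}. ?Q ! t \<le> ?P ! j} = {t. ov \<le> t \<and> t < k \<and> pi ! t \<le> pi ! j}"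
    proof (rule set_eqI)
      fix t
      show "(t \<in> {t \<in> {ov..<k}. ?Q ! t \<le> ?P ! j}) = (t \<in> {t. ov \<le> t \<and> t < k \<and> pi ! t \<le> pi ! j})"
      proof (cases "ov \<le> t \<and> t < k")
        case True
        have "?Q ! j < ?Q ! t \<longleftrightarrow> pi ! j < pi ! t"
          using order_iso_less_iff[OF m(2)] True jk k by simp
        then show ?thesis using True qp by auto
      next
        case False then show ?thesis by auto
      qed
    qed
    finally show ?thesis .
  qed
  have "?P ! j = card {z \<in> {1..u}. z \<le> ?P ! j}" using card_atmost_in[OF yu] by simp
  also have "\<dots> = card {z \<in> set ?P. z \<le> ?P ! j} + card {z \<in> R. z \<le> ?P ! j}"
    unfolding e by (rule card_Un_disjoint[OF fin dj])
  finally show ?thesis using c1 c2 by simp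
qed

text \<open>With shift \<open>0\<close> the common vertices do not depend on the pair (\<open>aligned_pairs_0_nth\<close>),
  so a pair is determined by its new vertices, chosen among the remaining \<open>2k - 2ov\<close>.\<close>

lemma card_aligned_pairs_0_le:
  assumes pat: "is_pattern pi" and k: "length pi = k" and ov: "0 < ov" "ov < k"
    and uo: "u + ov = 2 * k"
  shows "card (aligned_pairs pi u ov 0) \<le> (2 * k - 2 * ov) choose (k - ov)"
proof (cases "aligned_pairs pi u ov 0 = {}")
  case True then show ?thesis by simp
next
  case False
  then obtain x0 where x0: "x0 \<in> aligned_pairs pi u ov 0" by blast
  define cv where "cv j = card {i. i < k \<and> pi ! i \<le> pi ! j} + card {t. ov \<le> t \<and> t < k \<and> pi ! t \<le> pi ! j}" for j
  define C0 where "C0 = cv ` {..<ov}"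
  have inter: "set (fst x) \<inter> set (snd x) = C0" if x: "x \<in> aligned_pairs pi u ov 0" for x
  proof -
    have "set (fst x) \<inter> set (snd x) = (\<lambda>j. fst x ! (0 + j)) ` {..<ov}"
      by (rule aligned_pairs_Int[OF x pat k])
    also have "\<dots> = cv ` {..<ov}" using aligned_pairs_0_nth[OF x pat k] unfolding cv_def
      by auto
    finally show ?thesis unfolding C0_def .
  qed
  note m0 = aligned_pairsD[OF x0 pat k]
  have cC: "card C0 = ov"
  proof -
    have "C0 = (\<lambda>j. fst x0 ! (0 + j)) ` {..<ov}"
      using inter[OF x0] aligned_pairs_Int[OF x0 pat k] by simp
    moreover have "inj_on (\<lambda>j. fst x0 ! (0 + j)) {..<ov}"
    proof (rule inj_onI)
      fix a b assume "a \<in> {..<ov}" "b \<in> {..<ov}" "fst x0 ! (0 + a) = fst x0 ! (0 + b)"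
      then show "a = b" using nth_eq_iff_index_eq[OF m0(5)] m0(7) ov by auto
    qed
    ultimately show ?thesis using card_image by fastforce
  qed
  have C0u: "C0 \<subseteq> {1..u}" using inter[OF x0] m0(3) by blast
  define f where "f x = set (snd x) - set (fst x)" for x :: "nat list \<times> nat list"
  define RR where "RR = {R. R \<subseteq> {1..u} - C0 \<and> card R = k - ov}"
  have inj: "inj_on f (aligned_pairs pi u ov 0)"
    by (rule inj_onI) (use aligned_pairs_inj[OF _ _ pat k] in \<open>auto simp: f_def\<close>)
  have sub: "f ` aligned_pairs pi u ov 0 \<subseteq> RR"
  proof
    fix R assume "R \<in> f ` aligned_pairs pi u ov 0"
    then obtain x where x: "x \<in> aligned_pairs pi u ov 0" "R = f x" by blast
    note m = aligned_pairsD[OF x(1) pat k]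
    have cR: "card R = k - ov" using card_aligned_pairs_Diff[OF x(1) pat k] x(2) unfolding f_def by simp
    have "R \<subseteq> {1..u} - C0" using x(2) m(4) inter[OF x(1)] unfolding f_def by blast
    then show "R \<in> RR" unfolding RR_def using cR by simp
  qed
  have fRR: "finite RR" unfolding RR_def by simp
  have "card (aligned_pairs pi u ov 0) \<le> card RR" using card_inj_on_le[OF inj sub fRR] .
  also have "\<dots> = card ({1..u} - C0) choose (k - ov)" unfolding RR_def by (rule n_subsets) simp
  also have "card ({1..u} - C0) = 2 * k - 2 * ov"
  proof -
    have "finite C0" unfolding C0_def by simp
    then have "card ({1..u} - C0) = u - ov" using card_Diff_subset[OF _ C0u] cC by simp
    then show ?thesis using uo by simp
  qed
  finally show ?thesis .
qed

section \<open>Streaks of grounded patterns\<close>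

definition streak_set :: "nat list \<Rightarrow> nat set" where
  "streak_set pi = {m. m \<le> length pi \<and> (\<forall>i\<in>{1..m}. pe pi i = i)}"

lemma finite_streak_set: "finite (streak_set pi)" unfolding streak_set_def by simp

lemma streak_set_0: "0 \<in> streak_set pi" unfolding streak_set_def by simp

lemma streak_in_streak_set: "streak pi \<in> streak_set pi"
  unfolding streak_def streak_set_def[symmetric] using finite_streak_set streak_set_0
    by (intro Max_in) auto

lemma streak_ge: "m \<in> streak_set pi \<Longrightarrow> m \<le> streak pi"
  unfolding streak_def streak_set_def[symmetric] using finite_streak_set by simp

lemma streak_prefix: "j < streak pi \<Longrightarrow> pi ! j = Suc j"
proof -
  assume j: "j < streak pi"
  have "\<forall>i\<in>{1..streak pi}. pe pi i = i" using streak_in_streak_set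
    unfolding streak_set_def by simp
  then have "pe pi (Suc j) = Suc j" using j by simp
  then show ?thesis unfolding pe_def by simp
qed

lemma streak_le_length: "streak pi \<le> length pi"
  using streak_in_streak_set unfolding streak_set_def by simp

lemma streak_pos_if_grounded: "grounded pi \<Longrightarrow> 0 < streak pi"
  unfolding grounded_def using streak_ge[of _ pi] by (fastforce simp: streak_set_def)

lemma streak_less_length_if_grounded:
  assumes g: "grounded pi"
  shows "streak pi < length pi"
proof (rule ccontr)
  assume "\<not> streak pi < length pi"
  then have "streak pi = length pi" using streak_le_length le_neq_implies_less by blast
  then have "pi = [1..<Suc (length pi)]"
  proof (intro nth_equalityI)
    show "length pi = length [1..<Suc (length pi)]" by (simp only: length_upt)
    show "pi ! i = [1..<Suc (length pi)] ! i" if "i < length pi" for i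
      using that \<open>streak pi = length pi\<close> streak_prefix[of i pi] by (simp only: nth_upt)
  qed
  then show False using g unfolding grounded_def by simp
qed

lemma grounded_no_long_ascent:
  assumes g: "grounded pi"
  shows "\<exists>m. 0 < m \<and> m \<le> streak pi \<and> (\<forall>s. 1 \<le> s \<longrightarrow> s + m < length pi \<longrightarrow>
    \<not> (\<forall>t. s \<le> t \<and> t < s + m \<longrightarrow> pi ! t < pi ! Suc t))"
proof -
  obtain m where m: "0 < m" "m \<le> length pi" "\<forall>i\<in>{1..m}. pe pi i = i"
    "\<not> (\<exists>j. 2 \<le> j \<and> j + m \<le> length pi \<and> (\<forall>l. j \<le> l \<and> l < j + m \<longrightarrow> pe pi l < pe pi (Suc l)))"
    using g unfolding grounded_def by blast
  have "m \<le> streak pi" using m by (intro streak_ge) (simp add: streak_set_def)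
  moreover have "\<not> (\<forall>t. s \<le> t \<and> t < s + m \<longrightarrow> pi ! t < pi ! Suc t)"
    if s: "1 \<le> s" "s + m < length pi" for s
  proof
    assume ascent: "\<forall>t. s \<le> t \<and> t < s + m \<longrightarrow> pi ! t < pi ! Suc t"
    have "pe pi l < pe pi (Suc l)" if l: "Suc s \<le> l" "l < Suc s + m" for l
    proof -
      have "s \<le> l - 1 \<and> l - 1 < s + m" using l by auto
      then have "pi ! (l - 1) < pi ! Suc (l - 1)" using ascent by blast
      then show ?thesis using l unfolding pe_def by simp
    qed
    then have "\<forall>l. Suc s \<le> l \<and> l < Suc s + m \<longrightarrow> pe pi l < pe pi (Suc l)" by blast
    moreover have "2 \<le> Suc s" "Suc s + m \<le> length pi" using s by auto
    ultimately show False using m(4) by blast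
  qed
  ultimately show ?thesis using m(1) by blast
qed

lemma streak_less_nth_streak:
  assumes pat: "is_pattern pi" and sk: "streak pi < length pi"
  shows "streak pi < pi ! streak pi"
proof (rule ccontr)
  let ?st = "streak pi"
  assume "\<not> ?st < pi ! ?st"
  then have le: "pi ! ?st \<le> ?st" by simp
  have r: "pi ! ?st \<in> {1..length pi}" using is_pattern_nth[OF pat sk] .
  define j where "j = pi ! ?st - 1"
  have j: "j < ?st" "Suc j = pi ! ?st" using le r unfolding j_def by auto
  then have "pi ! j = pi ! ?st" using streak_prefix by simp
  then have "j = ?st" using nth_eq_iff_index_eq[OF is_pattern_distinct[OF pat]] j sk by simp
  then show False using j by simp
qed

lemma streak_prefix_less:
  assumes pat: "is_pattern pi" and sk: "streak pi < length pi" and ab: "a < b" "b \<le> streak pi"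
  shows "pi ! a < pi ! b"
proof -
  have pa: "pi ! a = Suc a" using ab streak_prefix by simp
  show ?thesis
  proof (cases "b = streak pi")
    case True
    then show ?thesis using streak_less_nth_streak[OF pat sk] pa ab by simp
  next
    case False
    then have "b < streak pi" using ab by simp
    then show ?thesis using streak_prefix pa ab by simp
  qed
qed

lemma aligned_pairs_empty_beyond_streak:
  assumes g: "grounded pi" and pat: "is_pattern pi" and k: "length pi = k"
    and ov: "streak pi < ov" and s: "1 \<le> s"
  shows "aligned_pairs pi u ov s = {}"
proof (rule ccontr)
  assume "aligned_pairs pi u ov s \<noteq> {}"
  then obtain x where x: "x \<in> aligned_pairs pi u ov s" by blast
  note m = aligned_pairsD[OF x pat k]
  obtain mm where mm: "0 < mm" "mm \<le> streak pi"
    "\<forall>s. 1 \<le> s \<longrightarrow> s + mm < k \<longrightarrow> \<not> (\<forall>t. s \<le> t \<and> t < s + mm \<longrightarrow> pi ! t < pi ! Suc t)"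
    using grounded_no_long_ascent[OF g, unfolded k] by blast
  have sk: "streak pi < length pi" using streak_less_length_if_grounded[OF g] .
  have o1: "ov - 1 < ov" using ov by simp
  have A: "\<forall>j<ov. s + j < length (fst x) \<and> snd x ! j = fst x ! (s + j)" using m(10)
    unfolding aligned_def by (rule conjunct1)
  have "s + (ov - 1) < length (fst x)" using A[rule_format, OF o1] by (rule conjunct1)
  then have smk: "s + mm < k" using m(7) mm ov by simp
  have "\<forall>t. s \<le> t \<and> t < s + mm \<longrightarrow> pi ! t < pi ! Suc t"
  proof (intro allI impI)
    fix t assume t: "s \<le> t \<and> t < s + mm"
    define a where "a = t - s"
    have a: "a < mm" "t = s + a" using t unfolding a_def by auto
    have "pi ! a < pi ! Suc a" using streak_prefix_less[OF pat sk, of a "Suc a"] a mm by simp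
    moreover have "a < ov" "Suc a < ov" using a mm ov by auto
    ultimately have "pi ! (s + a) < pi ! (s + Suc a)" using aligned_pairs_window[OF x pat k]
      by blast
    then show "pi ! t < pi ! Suc t" using a by simp
  qed
  then show False using mm(3) s smk by blast
qed

lemma aligned_pairs_ascending_run:
  assumes x: "x \<in> aligned_pairs pi u ov s" and pat: "is_pattern pi" and k: "length pi = k"
    and pref: "\<forall>j<ov. pi ! j = Suc j"
  shows "\<forall>t. s \<le> t \<longrightarrow> Suc t < s + ov \<longrightarrow> pi ! t < pi ! Suc t"
proof (intro allI impI)
  fix t assume t: "s \<le> t" "Suc t < s + ov"
  define a where "a = t - s"
  have a: "Suc a < ov" "t = s + a" using t unfolding a_def by auto
  have "pi ! a < pi ! Suc a" using pref a by simp
  then have "pi ! (s + a) < pi ! (s + Suc a)" using aligned_pairs_window[OF x pat k] a by simp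
  then show "pi ! t < pi ! Suc t" using a by simp
qed

text \<open>The number of aligned pairs with overlap \<open>ov\<close> and positive shift \<open>s\<close>, summed over \<open>s\<close>
  (\<open>card_aligned_pairs\<close>); a shift counts only if \<open>pi\<close> ascends on the window of length \<open>ov\<close>
  at \<open>s\<close>.\<close>

definition shifted_weight :: "nat list \<Rightarrow> nat \<Rightarrow> nat \<Rightarrow> nat" where
  "shifted_weight pi k ov = (\<Sum>s\<in>{1..k - ov}. if (\<forall>t. s \<le> t \<longrightarrow> Suc t < s + ov \<longrightarrow> pi ! t < pi ! Suc t)
       then (2 * k - ov - pi ! (s + ov - 1)) choose (k - ov) else 0)"

lemma sum_atMost_split: "(\<Sum>s\<in>{..n}. f s) = f 0 + (\<Sum>s\<in>{1..n}. f (s::nat))"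
proof -
  have "{..n} = insert 0 {1..n}" by auto
  then show ?thesis by simp
qed

lemma card_linked_pairs_within_streak:
  assumes pat: "is_pattern pi" and k: "length pi = k" and ov: "0 < ov" "ov \<le> streak pi" "ov < k"
  shows "card (linked_pairs pi (2 * k - ov) {1..2 * k - ov}) = ((2 * k - 2 * ov) choose (k - ov)) + 2 * shifted_weight pi k ov"
proof -
  let ?u = "2 * k - ov"
  have uo: "?u + ov = 2 * k" using ov by simp
  have pref: "\<forall>j<ov. pi ! j = Suc j" using streak_prefix ov by simp
  have cs: "card (aligned_pairs pi ?u ov s) = (if (\<forall>t. s \<le> t \<longrightarrow> Suc t < s + ov \<longrightarrow> pi ! t < pi ! Suc t)
       then (2 * k - ov - pi ! (s + ov - 1)) choose (k - ov) else 0)" if s: "s \<le> k - ov" for s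
  proof (cases "\<forall>t. s \<le> t \<longrightarrow> Suc t < s + ov \<longrightarrow> pi ! t < pi ! Suc t")
    case True
    have "s + ov \<le> k" using s ov by simp
    then show ?thesis using card_aligned_pairs[OF pat k ov(1) ov(3) uo pref True] True by simp
  next
    case False
    have emp: "aligned_pairs pi ?u ov s = {}"
      using aligned_pairs_ascending_run[OF _ pat k pref] False by blast
    show ?thesis by (subst if_not_P[OF False]) (simp add: emp)
  qed
  have c0: "card (aligned_pairs pi ?u ov 0) = (2 * k - 2 * ov) choose (k - ov)"
  proof -
    have r0: "\<forall>t. 0 \<le> t \<longrightarrow> Suc t < 0 + ov \<longrightarrow> pi ! t < pi ! Suc t" using pref by simp
    have "card (aligned_pairs pi ?u ov 0) = (2 * k - ov - pi ! (0 + ov - 1)) choose (k - ov)"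
      using cs[of 0] r0 by simp
    moreover have "pi ! (0 + ov - 1) = ov" using pref ov by simp
    moreover have "2 * k - ov - ov = 2 * k - 2 * ov" by simp
    ultimately show ?thesis by simp
  qed
  have "card (linked_pairs pi ?u {1..?u}) = (\<Sum>s\<in>{..k - ov}. card (aligned_pairs pi ?u ov s)) + (\<Sum>s\<in>{1..k - ov}. card (aligned_pairs pi ?u ov s))"
    by (rule card_linked_pairs_full[OF pat k ov(1) ov(3) uo])
  also have "(\<Sum>s\<in>{..k - ov}. card (aligned_pairs pi ?u ov s)) = card (aligned_pairs pi ?u ov 0) + (\<Sum>s\<in>{1..k - ov}. card (aligned_pairs pi ?u ov s))"
    by (rule sum_atMost_split)
  also have "(\<Sum>s\<in>{1..k - ov}. card (aligned_pairs pi ?u ov s)) = shifted_weight pi k ov"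
    unfolding shifted_weight_def by (rule sum.cong[OF refl]) (use cs in simp)
  finally show ?thesis using c0 by simp
qed

lemma card_linked_pairs_beyond_streak:
  assumes g: "grounded pi" and pat: "is_pattern pi" and k: "length pi = k"
    and ov: "streak pi < ov" "ov < k"
  shows "card (linked_pairs pi (2 * k - ov) {1..2 * k - ov}) \<le> (2 * k - 2 * ov) choose (k - ov)"
proof -
  let ?u = "2 * k - ov"
  have ov0: "0 < ov" using ov by simp
  have uo: "?u + ov = 2 * k" using ov by simp
  have e: "\<And>s. s \<in> {1..k - ov} \<Longrightarrow> card (aligned_pairs pi ?u ov s) = 0"
    using aligned_pairs_empty_beyond_streak[OF g pat k ov(1)] by simp
  have "card (linked_pairs pi ?u {1..?u}) = (\<Sum>s\<in>{..k - ov}. card (aligned_pairs pi ?u ov s)) + (\<Sum>s\<in>{1..k - ov}. card (aligned_pairs pi ?u ov s))"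
    by (rule card_linked_pairs_full[OF pat k ov0 ov(2) uo])
  also have "(\<Sum>s\<in>{..k - ov}. card (aligned_pairs pi ?u ov s)) = card (aligned_pairs pi ?u ov 0) + (\<Sum>s\<in>{1..k - ov}. card (aligned_pairs pi ?u ov s))"
    by (rule sum_atMost_split)
  also have "(\<Sum>s\<in>{1..k - ov}. card (aligned_pairs pi ?u ov s)) = 0" using e by simp
  finally show ?thesis using card_aligned_pairs_0_le[OF pat k ov0 ov(2) uo] by simp
qed

section \<open>Binomial weights and heights\<close>

definition binom_weight :: "nat \<Rightarrow> nat \<Rightarrow> nat \<Rightarrow> nat" where
  "binom_weight k ov v = (2 * k - ov - v) choose (k - ov)"

lemma binom_weight_double_le:
  assumes "ov \<le> w" "w < k"
  shows "2 * binom_weight k ov (Suc w) \<le> binom_weight k ov w"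
proof -
  define N where "N = 2 * k - ov - w"
  define r where "r = k - ov"
  have N0: "0 < N" unfolding N_def using assms by simp
  have e1: "binom_weight k ov w = N choose r" unfolding binom_weight_def N_def r_def by simp
  have e2: "binom_weight k ov (Suc w) = (N - 1) choose r" unfolding binom_weight_def N_def r_def
    by simp
  have ab: "(N - r) * (N choose r) = N * ((N - 1) choose r)" by (rule binomial_absorb_comp)
  have le: "2 * (N - r) \<le> N" unfolding N_def r_def using assms by simp
  have "N * (2 * ((N - 1) choose r)) = 2 * (N - r) * (N choose r)" using ab by simp
  also have "\<dots> \<le> N * (N choose r)" using le by (intro mult_right_mono) simp_all
  finally have "N * (2 * ((N - 1) choose r)) \<le> N * (N choose r)" .
  then have "2 * ((N - 1) choose r) \<le> N choose r" using N0 by simp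
  then show ?thesis using e1 e2 by simp
qed

lemma sum_binom_weight_tail_less:
  assumes "ov \<le> w" "w \<le> k"
  shows "(\<Sum>v\<in>{w<..k}. binom_weight k ov v) < binom_weight k ov w"
  using assms
proof (induction "k - w" arbitrary: w)
  case 0
  then have "w = k" by simp
  then show ?case unfolding binom_weight_def by simp
next
  case (Suc d)
  then have wk: "w < k" by simp
  have IH: "(\<Sum>v\<in>{Suc w<..k}. binom_weight k ov v) < binom_weight k ov (Suc w)"
    using Suc wk by simp
  have "{w<..k} = insert (Suc w) {Suc w<..k}" using wk by auto
  then have "(\<Sum>v\<in>{w<..k}. binom_weight k ov v) = binom_weight k ov (Suc w) + (\<Sum>v\<in>{Suc w<..k}. binom_weight k ov v)" by simp
  also have "\<dots> < 2 * binom_weight k ov (Suc w)" using IH by simp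
  also have "\<dots> \<le> binom_weight k ov w" using binom_weight_double_le Suc.prems wk by blast
  finally show ?case .
qed

lemma sum_binom_weight_less:
  assumes A: "A \<subseteq> {ov..k}" and B: "B \<subseteq> {ov..k}" and w: "w \<in> A"
    "w \<notin> B"
    and below: "\<forall>v<w. v \<in> A \<longleftrightarrow> v \<in> B"
  shows "(\<Sum>v\<in>B. binom_weight k ov v) < (\<Sum>v\<in>A. binom_weight k ov v)"
proof -
  have fA: "finite A" and fB: "finite B" using A B finite_subset by auto
  have eq: "A \<inter> {..<w} = B \<inter> {..<w}" using below by auto
  have sA: "(\<Sum>v\<in>A. binom_weight k ov v) = (\<Sum>v\<in>A \<inter> {..<w}. binom_weight k ov v) + (\<Sum>v\<in>A - {..<w}. binom_weight k ov v)"
    by (rule sum.Int_Diff[OF fA])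
  have sB: "(\<Sum>v\<in>B. binom_weight k ov v) = (\<Sum>v\<in>B \<inter> {..<w}. binom_weight k ov v) + (\<Sum>v\<in>B - {..<w}. binom_weight k ov v)"
    by (rule sum.Int_Diff[OF fB])
  have wA: "w \<in> A - {..<w}" using w by simp
  have fAw: "finite (A - {..<w})" using fA by simp
  have "(\<Sum>v\<in>A - {..<w}. binom_weight k ov v) = binom_weight k ov w + (\<Sum>v\<in>A - {..<w} - {w}. binom_weight k ov v)"
    by (rule sum.remove[OF fAw wA])
  then have "binom_weight k ov w \<le> (\<Sum>v\<in>A - {..<w}. binom_weight k ov v)" by simp
  moreover have "(\<Sum>v\<in>B - {..<w}. binom_weight k ov v) \<le> (\<Sum>v\<in>{w<..k}. binom_weight k ov v)"
  proof (rule sum_mono2)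
    show "finite {w<..k}" by simp
    show "B - {..<w} \<subseteq> {w<..k}"
    proof
      fix v assume v: "v \<in> B - {..<w}"
      then have "v \<noteq> w" using w by auto
      then show "v \<in> {w<..k}" using v B by auto
    qed
  qed simp
  moreover have "w \<in> {ov..k}" using w A by auto
  then have "(\<Sum>v\<in>{w<..k}. binom_weight k ov v) < binom_weight k ov w"
    using sum_binom_weight_tail_less by simp
  ultimately show ?thesis using sA sB eq by simp
qed

lemma sum_binom_weight_inj:
  assumes A: "A \<subseteq> {ov..k}" and B: "B \<subseteq> {ov..k}"
    and e: "(\<Sum>v\<in>A. binom_weight k ov v) = (\<Sum>v\<in>B. binom_weight k ov v)"
  shows "A = B"
proof (rule ccontr)
  assume ne: "A \<noteq> B"
  define D where "D = (A - B) \<union> (B - A)"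
  have fA: "finite A" by (rule finite_subset[OF A]) simp
  have fB: "finite B" by (rule finite_subset[OF B]) simp
  have fD: "finite D" unfolding D_def using fA fB by simp
  have D0: "D \<noteq> {}" using ne unfolding D_def by auto
  define w where "w = Min D"
  have wD: "w \<in> D" unfolding w_def using fD D0 by simp
  have below: "\<forall>v<w. v \<in> A \<longleftrightarrow> v \<in> B"
  proof (intro allI impI)
    fix v assume "v < w"
    then have "v \<notin> D" unfolding w_def using fD Min_le by fastforce
    then show "v \<in> A \<longleftrightarrow> v \<in> B" unfolding D_def by blast
  qed
  show False
  proof (cases "w \<in> A")
    case True
    then have "w \<notin> B" using wD unfolding D_def by blast
    then show False using sum_binom_weight_less[OF A B True _ below] e by simp
  next
    case False
    then have "w \<in> B" using wD unfolding D_def by blast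
    moreover have "\<forall>v<w. v \<in> B \<longleftrightarrow> v \<in> A" using below by blast
    ultimately show False using sum_binom_weight_less[OF B A _ False] e by simp
  qed
qed

definition ascent_lengths :: "nat list \<Rightarrow> nat \<Rightarrow> nat set" where
  "ascent_lengths pi i = {m. 1 \<le> m \<and> m < i \<and> (\<forall>j. i - m + 1 \<le> j \<and> j < i \<longrightarrow> pe pi j < pe pi (Suc j))}"

lemma height_pos_ge_iff:
  assumes i: "2 \<le> i" and ov: "1 \<le> ov"
  shows "ov \<le> height_pos pi i \<longleftrightarrow> ov \<in> ascent_lengths pi i"
proof -
  have hp: "height_pos pi i = Max (ascent_lengths pi i)"
    unfolding height_pos_def ascent_lengths_def by simp
  have fin: "finite (ascent_lengths pi i)" unfolding ascent_lengths_def
    by (rule finite_subset[of _ "{..<i}"]) auto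
  have one: "1 \<in> ascent_lengths pi i" unfolding ascent_lengths_def using i by auto
  have dc: "m' \<in> ascent_lengths pi i" if "m \<in> ascent_lengths pi i" "1 \<le> m'"
    "m' \<le> m" for m m'
    using that unfolding ascent_lengths_def by auto
  show ?thesis
  proof
    assume "ov \<le> height_pos pi i"
    moreover have "Max (ascent_lengths pi i) \<in> ascent_lengths pi i" using fin one
      by (intro Max_in) auto
    ultimately show "ov \<in> ascent_lengths pi i" using dc ov hp by simp
  next
    assume "ov \<in> ascent_lengths pi i"
    then show "ov \<le> height_pos pi i" using hp fin by simp
  qed
qed

lemma the_position:
  assumes pat: "is_pattern pi" and k: "length pi = k" and i: "1 \<le> i" "i \<le> k"
  shows "(THE i'. 1 \<le> i' \<and> i' \<le> length pi \<and> pe pi i' = pe pi i) = i"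
proof (rule the_equality)
  show "1 \<le> i \<and> i \<le> length pi \<and> pe pi i = pe pi i" using i k by simp
next
  fix i' assume h: "1 \<le> i' \<and> i' \<le> length pi \<and> pe pi i' = pe pi i"
  then have "pi ! (i' - 1) = pi ! (i - 1)" unfolding pe_def by simp
  moreover have "i' - 1 < length pi" "i - 1 < length pi" using h i k by auto
  ultimately have "i' - 1 = i - 1" using nth_eq_iff_index_eq[OF is_pattern_distinct[OF pat]]
    by blast
  then show "i' = i" using h i by arith
qed

definition run_ends :: "nat list \<Rightarrow> nat \<Rightarrow> nat \<Rightarrow> nat set" where
  "run_ends pi k ov = (\<lambda>s. pi ! (s + ov - 1)) ` {s \<in> {1..k - ov}. \<forall>t. s \<le> t \<longrightarrow> Suc t < s + ov \<longrightarrow> pi ! t < pi ! Suc t}"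

lemma height_val_if_run_ends:
  assumes pat: "is_pattern pi" and k: "length pi = k" and p0: "pi ! 0 = 1" and ov: "1 \<le> ov"
    and v: "v \<in> run_ends pi k ov"
  shows "v \<in> {2..k} \<and> ov \<le> height_val pi v"
proof -
  obtain s where s: "1 \<le> s" "s \<le> k - ov" "\<forall>t. s \<le> t \<longrightarrow> Suc t < s + ov \<longrightarrow> pi ! t < pi ! Suc t"
    "v = pi ! (s + ov - 1)" using v unfolding run_ends_def by auto
  define i where "i = s + ov"
  have i: "2 \<le> i" "i \<le> k" using s ov unfolding i_def by auto
  have ik: "i - 1 < k" using i by simp
  have vi: "pe pi i = v" unfolding pe_def i_def using s by simp
  have "pi ! (i - 1) \<in> {1..k}" using is_pattern_nth[OF pat] ik k by simp
  then have vr: "v \<in> {1..k}" using vi unfolding pe_def by simp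
  have "v \<noteq> 1"
  proof
    assume "v = 1"
    then have "pi ! (i - 1) = pi ! 0" using vi p0 unfolding pe_def by simp
    moreover have "i - 1 < length pi" "0 < length pi" using ik k by auto
    ultimately have "i - 1 = 0" using nth_eq_iff_index_eq[OF is_pattern_distinct[OF pat]] by blast
    then show False using i by simp
  qed
  then have v2: "v \<in> {2..k}" using vr by auto
  have hv: "height_val pi v = height_pos pi i"
    unfolding height_val_def using the_position[OF pat k, of i] i vi by simp
  have "ov \<in> ascent_lengths pi i" unfolding ascent_lengths_def
  proof (intro CollectI conjI allI impI)
    show "1 \<le> ov" by (rule ov)
    show "ov < i" using s unfolding i_def by simp
    fix j assume j: "i - ov + 1 \<le> j \<and> j < i"
    then have "s \<le> j - 1" "Suc (j - 1) < s + ov" unfolding i_def by auto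
    then have "pi ! (j - 1) < pi ! Suc (j - 1)" using s(3) by blast
    then show "pe pi j < pe pi (Suc j)" unfolding pe_def using j unfolding i_def by simp
  qed
  then show ?thesis
    using height_pos_ge_iff[OF i(1) ov] hv v2 by simp
qed

lemma run_ends_if_height_val:
  assumes pat: "is_pattern pi" and k: "length pi = k" and p0: "pi ! 0 = 1" and ov: "1 \<le> ov"
    and h: "v \<in> {2..k} \<and> ov \<le> height_val pi v"
  shows "v \<in> run_ends pi k ov"
proof -
  from h have "v \<in> set pi" using is_pattern_set[OF pat] k by auto
  then obtain j where j: "j < k" "pi ! j = v" using k by (metis in_set_conv_nth)
  define i where "i = Suc j"
  have j0: "j \<noteq> 0"
  proof
    assume "j = 0" then have "v = 1" using j p0 by simp
    then show False using h by simp
  qed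
  have i: "2 \<le> i" "i \<le> k" "1 \<le> i" using j j0 unfolding i_def by auto
  have vi: "pe pi i = v" unfolding pe_def i_def using j by simp
  have hv: "height_val pi v = height_pos pi i"
    unfolding height_val_def using the_position[OF pat k i(3) i(2)] vi by simp
  have "ov \<in> ascent_lengths pi i" using height_pos_ge_iff[OF i(1) ov] h hv by simp
  then have hs: "ov < i" "\<forall>j'. i - ov + 1 \<le> j' \<and> j' < i \<longrightarrow> pe pi j' < pe pi (Suc j')" unfolding ascent_lengths_def by auto
  define s where "s = i - ov"
  have s: "1 \<le> s" "s \<le> k - ov" using hs i unfolding s_def by auto
  have run: "\<forall>t. s \<le> t \<longrightarrow> Suc t < s + ov \<longrightarrow> pi ! t < pi ! Suc t"
  proof (intro allI impI)
    fix t assume t: "s \<le> t" "Suc t < s + ov"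
    then have "i - ov + 1 \<le> Suc t \<and> Suc t < i" unfolding s_def using hs by auto
    then have "pe pi (Suc t) < pe pi (Suc (Suc t))" using hs(2) by blast
    then show "pi ! t < pi ! Suc t" unfolding pe_def by simp
  qed
  have "v = pi ! (s + ov - 1)" using j hs unfolding s_def i_def by simp
  then show ?thesis unfolding run_ends_def using s run by auto
qed

lemma run_ends_iff:
  assumes pat: "is_pattern pi" and k: "length pi = k" and p0: "pi ! 0 = 1" and ov: "1 \<le> ov"
  shows "v \<in> run_ends pi k ov \<longleftrightarrow> v \<in> {2..k} \<and> ov \<le> height_val pi v"
  using height_val_if_run_ends[OF pat k p0 ov] run_ends_if_height_val[OF pat k p0 ov] by blast

lemma run_ends_subset:
  assumes pat: "is_pattern pi" and k: "length pi = k"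
  shows "run_ends pi k ov \<subseteq> {ov..k}"
proof
  fix v assume "v \<in> run_ends pi k ov"
  then obtain s where s: "1 \<le> s"
    "s \<le> k - ov" "\<forall>t. s \<le> t \<longrightarrow> Suc t < s + ov \<longrightarrow> pi ! t < pi ! Suc t"
    "v = pi ! (s + ov - 1)" unfolding run_ends_def by auto
  have lb: "j < ov \<Longrightarrow> Suc j \<le> pi ! (s + j)" for j
  proof (induction j)
    case 0
    have "s < k" using s 0 by simp
    then show ?case using is_pattern_nth[OF pat] k by fastforce
  next
    case (Suc j)
    have "pi ! (s + j) < pi ! Suc (s + j)" using s(3) Suc.prems by simp
    then show ?case using Suc by simp
  qed
  show "v \<in> {ov..k}"
  proof -
    have "ov \<le> v"
    proof (cases "ov = 0")
      case True then show ?thesis by simp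
    next
      case False
      then have "ov - 1 < ov" by simp
      then have "Suc (ov - 1) \<le> pi ! (s + (ov - 1))" by (rule lb)
      moreover have "s + (ov - 1) = s + ov - 1" "Suc (ov - 1) = ov" using False by auto
      ultimately show ?thesis using s(4) by simp
    qed
    moreover have "s + ov - 1 < k" using s by simp
    then have "v \<le> k" using is_pattern_nth[OF pat] k s(4) by fastforce
    ultimately show ?thesis by simp
  qed
qed

lemma shifted_weight_eq_sum:
  assumes pat: "is_pattern pi" and k: "length pi = k"
  shows "shifted_weight pi k ov = (\<Sum>v\<in>run_ends pi k ov. binom_weight k ov v)"
proof -
  let ?R = "\<lambda>s. \<forall>t. s \<le> t \<longrightarrow> Suc t < s + ov \<longrightarrow> pi ! t < pi ! Suc t"
  let ?S = "{s \<in> {1..k - ov}. ?R s}"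
  have "shifted_weight pi k ov = (\<Sum>s\<in>?S. (2 * k - ov - pi ! (s + ov - 1)) choose (k - ov))"
    unfolding shifted_weight_def by (rule sum.inter_filter[symmetric]) simp
  also have "\<dots> = (\<Sum>s\<in>?S. binom_weight k ov (pi ! (s + ov - 1)))"
    unfolding binom_weight_def by simp
  also have "\<dots> = (\<Sum>v\<in>run_ends pi k ov. binom_weight k ov v)"
  proof -
    have inj: "inj_on (\<lambda>s. pi ! (s + ov - 1)) ?S"
    proof (rule inj_onI)
      fix a b assume a: "a \<in> ?S" and b: "b \<in> ?S"
        and e: "pi ! (a + ov - 1) = pi ! (b + ov - 1)"
      have "a + ov - 1 < k" "b + ov - 1 < k" using a b by auto
      then have "a + ov - 1 = b + ov - 1"
        using nth_eq_iff_index_eq[OF is_pattern_distinct[OF pat]] e k by simp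
      then show "a = b" using a b by auto
    qed
    show ?thesis unfolding run_ends_def using sum.reindex[OF inj, of "binom_weight k ov"] by simp
  qed
  finally show ?thesis .
qed

lemma run_ends_empty_beyond_streak:
  assumes g: "grounded pi" and pat: "is_pattern pi" and k: "length pi = k" and ov: "streak pi < ov"
  shows "run_ends pi k ov = {}"
proof (rule ccontr)
  assume "run_ends pi k ov \<noteq> {}"
  then obtain s where s: "1 \<le> s"
    "s \<le> k - ov" "\<forall>t. s \<le> t \<longrightarrow> Suc t < s + ov \<longrightarrow> pi ! t < pi ! Suc t"
    unfolding run_ends_def by auto
  obtain mm where mm: "0 < mm" "mm \<le> streak pi"
    "\<forall>s. 1 \<le> s \<longrightarrow> s + mm < k \<longrightarrow> \<not> (\<forall>t. s \<le> t \<and> t < s + mm \<longrightarrow> pi ! t < pi ! Suc t)"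
    using grounded_no_long_ascent[OF g, unfolded k] by blast
  have sk: "streak pi < k" using streak_less_length_if_grounded[OF g] k by simp
  have smk: "s + mm < k" using s mm ov sk by simp
  have "\<forall>t. s \<le> t \<and> t < s + mm \<longrightarrow> pi ! t < pi ! Suc t"
  proof (intro allI impI)
    fix t assume "s \<le> t \<and> t < s + mm"
    then have "s \<le> t" "Suc t < s + ov" using mm ov by auto
    then show "pi ! t < pi ! Suc t" using s(3) by blast
  qed
  then show False using mm(3) s(1) smk by blast
qed

lemma shifted_weight_pos:
  assumes pat: "is_pattern pi" and k: "length pi = k"
    and ov: "0 < ov" "ov \<le> streak pi" and st: "streak pi < k"
  shows "0 < shifted_weight pi k ov"
proof -
  have run: "\<forall>t. 1 \<le> t \<longrightarrow> Suc t < 1 + ov \<longrightarrow> pi ! t < pi ! Suc t"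
    using streak_prefix_less[OF pat] st k ov by simp
  have "pi ! ov \<le> k" using is_pattern_nth[OF pat] ov st k by fastforce
  then have "0 < (2 * k - ov - pi ! (1 + ov - 1)) choose (k - ov)" by simp
  also have "\<dots> = (if (\<forall>t. 1 \<le> t \<longrightarrow> Suc t < 1 + ov \<longrightarrow> pi ! t < pi ! Suc t)
      then (2 * k - ov - pi ! (1 + ov - 1)) choose (k - ov) else 0)"
    using run by simp
  also have "\<dots> \<le> shifted_weight pi k ov"
    unfolding shifted_weight_def by (rule member_le_sum) (use ov st in auto)
  finally show ?thesis .
qed

text \<open>At overlap \<open>ov = streak a + 1 \<le> streak b\<close> the pattern \<open>b\<close> has strictly more realisable
  overlapping pairs than \<open>a\<close>.\<close>

lemma streak_ge_if_card_linked_pairs_eq: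
  assumes a: "grounded a" "is_pattern a" "length a = k"
    and b: "grounded b" "is_pattern b" "length b = k"
    and same: "\<And>u. card (linked_pairs a u {1..u}) = card (linked_pairs b u {1..u})"
  shows "streak b \<le> streak a"
proof (rule ccontr)
  assume "\<not> streak b \<le> streak a"
  define ov where "ov = Suc (streak a)"
  have ov: "0 < ov" "ov \<le> streak b" "ov < k"
    using \<open>\<not> streak b \<le> streak a\<close> streak_less_length_if_grounded[OF b(1)] b(3) unfolding ov_def by auto
  have "card (linked_pairs a (2 * k - ov) {1..2 * k - ov}) \<le> (2 * k - 2 * ov) choose (k - ov)"
    using card_linked_pairs_beyond_streak[OF a, of ov] ov unfolding ov_def by simp
  moreover have "card (linked_pairs b (2 * k - ov) {1..2 * k - ov}) =
      ((2 * k - 2 * ov) choose (k - ov)) + 2 * shifted_weight b k ov"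
    using card_linked_pairs_within_streak[OF b(2,3) ov(1,2,3)] .
  moreover have "0 < shifted_weight b k ov"
    using shifted_weight_pos[OF b(2,3) ov(1,2)] streak_less_length_if_grounded[OF b(1)] b(3) by simp
  ultimately show False using same[of "2 * k - ov"] by simp
qed

text \<open>With equal streaks, the counts at overlap \<open>ov \<le> streak\<close> determine \<open>shifted_weight\<close>, hence
  the set of values of height at least \<open>ov\<close>, since the binomial weights are super-decreasing.\<close>

lemma height_val_ge_if_card_linked_pairs_eq:
  assumes a: "grounded a" "is_pattern a" "length a = k"
    and b: "grounded b" "is_pattern b" "length b = k"
    and streak: "streak a = streak b"
    and same: "\<And>u. card (linked_pairs a u {1..u}) = card (linked_pairs b u {1..u})"
    and v: "v \<in> {2..k}"
  shows "height_val b v \<le> height_val a v"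
proof -
  define ov where "ov = height_val b v"
  have a0: "a ! 0 = 1" and b0: "b ! 0 = 1"
    using streak_prefix streak_pos_if_grounded[OF a(1)] streak_pos_if_grounded[OF b(1)] by simp_all
  have ov1: "1 \<le> ov"
  proof -
    obtain j where j: "j < k" "b ! j = v"
      using v is_pattern_set[OF b(2)] b(3)
        by (metis atLeastAtMost_iff in_set_conv_nth le_trans one_le_numeral)
    have "j \<noteq> 0"
    proof
      assume "j = 0"
      then show False using j b0 v by simp
    qed
    then have i: "2 \<le> Suc j" "1 \<le> Suc j" "Suc j \<le> k" using j by auto
    have "height_val b v = height_pos b (Suc j)"
      unfolding height_val_def using the_position[OF b(2,3) i(2,3)] j by (simp add: pe_def)
    moreover have "1 \<in> ascent_lengths b (Suc j)" unfolding ascent_lengths_def using i by auto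
    ultimately show ?thesis using height_pos_ge_iff[OF i(1), of 1] unfolding ov_def by simp
  qed
  have vb: "v \<in> run_ends b k ov" using run_ends_iff[OF b(2,3) b0 ov1] v unfolding ov_def by simp
  have ovs: "ov \<le> streak b"
    using run_ends_empty_beyond_streak[OF b] vb by (metis empty_iff not_le)
  have ovk: "ov < k" using ovs streak_less_length_if_grounded[OF b(1)] b(3) by simp
  have "shifted_weight a k ov = shifted_weight b k ov"
    using card_linked_pairs_within_streak[OF a(2,3) _ _ ovk] card_linked_pairs_within_streak[OF b(2,3) _ _ ovk]
      ov1 ovs streak same[of "2 * k - ov"] by simp
  then have "run_ends a k ov = run_ends b k ov"
    using shifted_weight_eq_sum[OF a(2,3)] shifted_weight_eq_sum[OF b(2,3)]
      sum_binom_weight_inj[OF run_ends_subset[OF a(2,3)] run_ends_subset[OF b(2,3)]] by simp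
  then show ?thesis using vb run_ends_iff[OF a(2,3) a0 ov1] unfolding ov_def by simp
qed

theorem proposition4p31:
  fixes pi pi' :: "nat list" and k :: nat
  assumes "is_pattern pi" and "is_pattern pi'"
    and "length pi = k" and "length pi' = k"
    and "grounded pi" and "grounded pi'"
    and "strongly_c_forest_wilf_equiv pi pi'"
  shows "streak pi = streak pi' \<and>
         (\<forall>i\<in>{2..k}. height_val pi i = height_val pi' i)"
proof -
  note pi = assms(5,1,3) and pi' = assms(6,2,4)
  have same: "card (linked_pairs pi u {1..u}) = card (linked_pairs pi' u {1..u})" for u
    using card_linked_pairs_eq[OF assms(1,2)] wilf_equiv_pair_sum_eq[OF assms(7)] assms(3,4) by simp
  have streak: "streak pi = streak pi'"
    using streak_ge_if_card_linked_pairs_eq[OF pi pi' same]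
      streak_ge_if_card_linked_pairs_eq[OF pi' pi same[symmetric]] by simp
  have "height_val pi i = height_val pi' i" if "i \<in> {2..k}" for i
    using height_val_ge_if_card_linked_pairs_eq[OF pi pi' streak same that]
      height_val_ge_if_card_linked_pairs_eq[OF pi' pi streak[symmetric] same[symmetric] that]
    by simp
  then show ?thesis using streak by blast
qed

end
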